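(* Let $n\geq 3$ and let $A_n$ be the graph with vertices $\{1,\dots,n\}$ and edges $\{i,i+1\}$ for $1\leq i\leq n-1$. Then $$\#\mathcal{P}_d(\mathcal{E}_{A_n})=\begin{cases}2n-2d & \text{if } 3\leq d\leq n-1,\\ 0 & \text{if } d\geq n,\end{cases}$$ and $\mathcal{P}_2(\mathcal{E}_{A_n})$ is a union of $2n-6$ copies of $\mathbb{P}^1$ if $n>3$, and consists of two points if $n=3$.
   Context: Work over an algebraically closed field $k$. The Fomin–Kirillov algebra $\mathcal{E}_n$ is the graded $k$-algebra generated by degree-$1$ elements $x_{ij}$, $1\leq i<j\leq n$, subject to: $x_{ij}^2=0$; $x_{ij}x_{kl}=x_{kl}x_{ij}$ whenever $\{i,j\}\cap\{k,l\}=\emptyset$; $x_{ij}x_{jk}-x_{jk}x_{ik}-x_{ik}x_{ij}=0$ and $x_{jk}x_{ij}-x_{ik}x_{jk}-x_{ij}x_{ik}=0$ for $i<j<k$. For a graph $G$ on $\{1,\dots,n\}$, $\mathcal{E}_G$ is the subalgebra of $\mathcal{E}_n$ generated by the $x_{ij}$ with $\{i,j\}$ an edge of $G$. For a connected graded algebra $A=k\langle x_1,\dots,x_r\rangle/I$ generated in degree $1$, a degree-$d$ truncated point module is a graded cyclic module $M=ke_0\oplus\cdots\oplus ke_d$ generated by $e_0$; writing $x_i e_j=\lambda_i^j e_{j+1}$, such modules correspond bijectively to points $([\lambda_1^0:\cdots:\lambda_r^0],\dots,[\lambda_1^{d-1}:\cdots:\lambda_r^{d-1}])\in(\mathbb{P}^{r-1})^{\times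 d}$ satisfying the multilinearized relations (each homogeneous relation $\sum_I c_I x_{i_1}\cdots x_{i_t}$ yields $\sum_I c_I\lambda_{i_1}^{s+t-1}\cdots\lambda_{i_t}^{s}=0$ for $0\leq s\leq d-t$). $\mathcal{P}_d(A)$ denotes this subset of $(\mathbb{P}^{r-1})^{\times d}$; here $A=\mathcal{E}_{A_n}$ with generators $x_{i,i+1}$, $1\leq i\leq n-1$. *)

theory Defs
  imports "HOL-Computational_Algebra.Polynomial"
begin

text \<open>Noncommutative polynomials over a field in letters of type 'l, represented as
coefficient functions on words (lists of letters).  The generator x_ij of the
Fomin-Kirillov algebra E_n is the letter (i,j) with 1 <= i < j <= n.\<close>

type_synonym ('l, 'k) ncpoly = "'l list \<Rightarrow> 'k"

definition mono :: "'l list \<Rightarrow> ('l, 'k::field) ncpoly" where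
  "mono w = (\<lambda>u. if u = w then 1 else 0)"

text \<open>u * r * v for words u, v.\<close>
definition sandwich :: "'l list \<Rightarrow> ('l, 'k::field) ncpoly \<Rightarrow> 'l list \<Rightarrow> ('l, 'k) ncpoly" where
  "sandwich u r v = (\<lambda>w. if length u + length v \<le> length w \<and> take (length u) w = u
       \<and> drop (length w - length v) w = v
     then r (take (length w - length u - length v) (drop (length u) w)) else 0)"

definition is_gen :: "nat \<Rightarrow> nat \<times> nat \<Rightarrow> bool" where
  "is_gen n p \<longleftrightarrow> 1 \<le> fst p \<and> fst p < snd p \<and> snd p \<le> n"

inductive_set FK_rels :: "nat \<Rightarrow> ((nat \<times> nat), 'k::field) ncpoly set" for n where
  sq: "1 \<le> i \<Longrightarrow> i < j \<Longrightarrow> j \<le> n \<Longrightarrow> mono [(i,j),(i,j)] \<in> FK_rels n"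
| comm: "is_gen n (i,j) \<Longrightarrow> is_gen n (k,l) \<Longrightarrow> {i,j} \<inter> {k,l} = {} \<Longrightarrow>
     (\<lambda>w. mono [(i,j),(k,l)] w - mono [(k,l),(i,j)] w) \<in> FK_rels n"
| tri1: "1 \<le> i \<Longrightarrow> i < j \<Longrightarrow> j < k \<Longrightarrow> k \<le> n \<Longrightarrow>
     (\<lambda>w. mono [(i,j),(j,k)] w - mono [(j,k),(i,k)] w - mono [(i,k),(i,j)] w) \<in> FK_rels n"
| tri2: "1 \<le> i \<Longrightarrow> i < j \<Longrightarrow> j < k \<Longrightarrow> k \<le> n \<Longrightarrow>
     (\<lambda>w. mono [(j,k),(i,j)] w - mono [(i,k),(j,k)] w - mono [(i,j),(i,k)] w) \<in> FK_rels n"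

inductive_set FK_ideal :: "nat \<Rightarrow> ((nat \<times> nat), 'k::field) ncpoly set" for n where
  zero: "(\<lambda>_. 0) \<in> FK_ideal n"
| add: "f \<in> FK_ideal n \<Longrightarrow> g \<in> FK_ideal n \<Longrightarrow> (\<lambda>w. f w + g w) \<in> FK_ideal n"
| smult: "f \<in> FK_ideal n \<Longrightarrow> (\<lambda>w. c * f w) \<in> FK_ideal n"
| gen: "r \<in> FK_rels n \<Longrightarrow> sandwich u r v \<in> FK_ideal n"

definition edgeA :: "nat \<Rightarrow> nat \<times> nat" where
  "edgeA a = (a, a + 1)"

text \<open>Homogeneous degree-t relations of E_{A_n}: homogeneous elements of the FK ideal
involving only the generators x_{a,a+1}, i.e. the kernel of k<x_{a,a+1}> -> E_n.\<close>
definition An_rel :: "nat \<Rightarrow> nat \<Rightarrow> ((nat \<times> nat), 'k::field) ncpoly \<Rightarrow> bool" where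
  "An_rel n t f \<longleftrightarrow> f \<in> FK_ideal n \<and>
     (\<forall>w. f w \<noteq> 0 \<longrightarrow> length w = t \<and> (\<forall>p\<in>set w. \<exists>a. 1 \<le> a \<and> a < n \<and> p = edgeA a))"

text \<open>Projective space P^{r-1}: nonzero vectors in k^r (functions supported on {1..r})
modulo nonzero scalars; a point is the set of representatives.\<close>
definition vecs :: "nat \<Rightarrow> (nat \<Rightarrow> 'k::field) set" where
  "vecs r = {v. (\<forall>i. v i \<noteq> 0 \<longrightarrow> i \<in> {1..r}) \<and> (\<exists>i. v i \<noteq> 0)}"

definition ppt :: "(nat \<Rightarrow> 'k::field) \<Rightarrow> (nat \<Rightarrow> 'k) set" where
  "ppt v = {(\<lambda>i. c * v i) | c. c \<noteq> 0}"

text \<open>P_d(E_{A_n}) as a subset of (P^{n-2})^d: a d-tuple of projective points, encoded as a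
function j |-> point, with value {} at j >= d.  Point j holds (lambda^j_1 : ... : lambda^j_{n-1}).\<close>
definition Pd_An :: "'k::field itself \<Rightarrow> nat \<Rightarrow> nat \<Rightarrow> (nat \<Rightarrow> (nat \<Rightarrow> 'k) set) set" where
  "Pd_An _ n d = {(\<lambda>j. if j < d then ppt (v j) else {}) | v :: nat \<Rightarrow> nat \<Rightarrow> 'k.
      (\<forall>j<d. v j \<in> vecs (n - 1)) \<and>
      (\<forall>(f :: ((nat \<times> nat), 'k) ncpoly) t s. An_rel n t f \<and> s + t \<le> d \<longrightarrow>
         (\<Sum>u\<in>{u. length u = t \<and> set u \<subseteq> {1..n - 1}}.
             f (map edgeA u) * (\<Prod>j<t. v (s + t - 1 - j) (u ! j))) = 0)}"

text \<open>A linearly embedded copy of P^1 inside (P^{r-1})^2: the image of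
[s:t] |-> (F(s,t), G(s,t)) where each component is either a linear embedding of P^1
(a projective line) or constant, and at least one component is a linear embedding.\<close>
definition line_map :: "nat \<Rightarrow> ('k::field \<times> 'k \<Rightarrow> (nat \<Rightarrow> 'k) set) \<Rightarrow> bool" where
  "line_map r F \<longleftrightarrow> (\<exists>a b. (\<forall>i. (a i \<noteq> 0 \<or> b i \<noteq> 0) \<longrightarrow> i \<in> {1..r}) \<and>
      (\<forall>s t. (\<forall>i. s * a i + t * b i = 0) \<longrightarrow> s = 0 \<and> t = 0) \<and>
      F = (\<lambda>(s,t). ppt (\<lambda>i. s * a i + t * b i)))"

definition const_map :: "nat \<Rightarrow> ('k::field \<times> 'k \<Rightarrow> (nat \<Rightarrow> 'k) set) \<Rightarrow> bool" where
  "const_map r F \<longleftrightarrow> (\<exists>p \<in> vecs r. F = (\<lambda>_. ppt p))"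

definition is_P1_copy :: "nat \<Rightarrow> (nat \<Rightarrow> (nat \<Rightarrow> 'k::field) set) set \<Rightarrow> bool" where
  "is_P1_copy r C \<longleftrightarrow> (\<exists>F G. (line_map r F \<or> const_map r F) \<and> (line_map r G \<or> const_map r G)
      \<and> (line_map r F \<or> line_map r G) \<and>
      C = {(\<lambda>j. if j = 0 then F (s,t) else if j = 1 then G (s,t) else {}) | s t. (s,t) \<noteq> (0,0)})"

end

theory Submission
  imports Defs
begin

text \<open>
  The multilinearised quadratic relations \<open>x\<^sub>a\<^sup>2 = 0\<close> and \<open>x\<^sub>a x\<^sub>b = x\<^sub>b x\<^sub>a\<close> (\<open>|a - b| \<ge> 2\<close>)
  say that every index in the support of a coordinate \<open>v\<^sub>s\<^sub>+\<^sub>1\<close> of a point is a neighbour of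
  every index in the support of \<open>v\<^sub>s\<close>.  The braid relation \<open>x\<^sub>a x\<^sub>a\<^sub>+\<^sub>1 x\<^sub>a = x\<^sub>a\<^sub>+\<^sub>1 x\<^sub>a x\<^sub>a\<^sub>+\<^sub>1\<close>, which
  holds in \<open>E\<^sub>A\<^sub>n\<close>, then forces three consecutive coordinates to be basis vectors
  \<open>e\<^sub>c, e\<^sub>c\<^sub>\<plusminus>\<^sub>1, e\<^sub>c\<^sub>\<plusminus>\<^sub>2\<close>; so in degree \<open>d \<ge> 3\<close> every point is an increasing or decreasing run of
  basis vectors, and there are \<open>2(n - d)\<close> of them.  Conversely every run is a point, because
  the monotone words \<open>x\<^sub>c\<^sub>+\<^sub>t\<^sub>-\<^sub>1 \<cdots> x\<^sub>c\<close> and \<open>x\<^sub>c \<cdots> x\<^sub>c\<^sub>+\<^sub>t\<^sub>-\<^sub>1\<close> have coefficient zero in every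
  relation of \<open>E\<^sub>A\<^sub>n\<close>: the algebra \<open>E\<^sub>n\<close> acts on subsets of \<open>{1..n}\<close>, \<open>x\<^sub>i\<^sub>j\<close> deleting \<open>i\<close>
  (or \<open>j\<close>) when \<open>i, j\<close> are neighbours, and a monotone word is the only word in the
  generators of \<open>E\<^sub>A\<^sub>n\<close> carrying \<open>{1..n}\<close> to its image.  In degree two only the quadratic
  relations are visible: the points are the pairs \<open>(x, e\<^sub>a)\<close> and \<open>(e\<^sub>a, x)\<close> with \<open>x\<close> on the
  line through \<open>e\<^sub>a\<^sub>-\<^sub>1\<close> and \<open>e\<^sub>a\<^sub>+\<^sub>1\<close>, giving \<open>2n - 6\<close> projective lines for \<open>2 \<le> a \<le> n - 2\<close>,
  and for \<open>n = 3\<close> only the two runs.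
\<close>

section \<open>A deletion representation of the Fomin--Kirillov algebra\<close>

definition gen_words :: "nat \<Rightarrow> nat \<Rightarrow> (nat \<times> nat) list set" where
  "gen_words n t = {w. length w = t \<and> set w \<subseteq> Collect (is_gen n)}"

lemma finite_gen_words: "finite (gen_words n t)"
proof -
  have "Collect (is_gen n) \<subseteq> {0..n} \<times> {0..n}" by (auto simp: is_gen_def)
  hence "finite (Collect (is_gen n))" by (rule finite_subset) auto
  thus ?thesis unfolding gen_words_def using finite_lists_length_eq by (simp add: conj_commute)
qed

text \<open>The generator \<open>x\<^sub>i\<^sub>j\<close> acts on subsets \<open>R\<close> of \<open>{1..n}\<close>: if \<open>i\<close> and \<open>j\<close> are
  neighbours in \<open>R\<close> it deletes \<open>i\<close> (if \<open>left\<close>) or \<open>j\<close> (otherwise), and it kills \<open>R\<close>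
  (result \<open>None\<close>) otherwise.  Both variants
  respect the Fomin--Kirillov relations.\<close>

definition adjacent_in :: "nat \<Rightarrow> nat set \<Rightarrow> nat \<times> nat \<Rightarrow> bool" where
  "adjacent_in n R p \<longleftrightarrow>
     is_gen n p \<and> fst p \<in> R \<and> snd p \<in> R \<and> (\<forall>m. fst p < m \<and> m < snd p \<longrightarrow> m \<notin> R)"

definition del_step :: "bool \<Rightarrow> nat \<Rightarrow> nat \<times> nat \<Rightarrow> nat set \<Rightarrow> nat set option" where
  "del_step left n p R =
     (if adjacent_in n R p then Some (R - {if left then fst p else snd p}) else None)"

lemma del_step_edge:
  "i < j \<Longrightarrow> del_step left n (i, j) R =
     (if 1 \<le> i \<and> j \<le> n \<and> i \<in> R \<and> j \<in> R \<and> (\<forall>m. i < m \<and> m < j \<longrightarrow> m \<notin> R)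
      then Some (R - {if left then i else j}) else None)"
  by (simp add: del_step_def adjacent_in_def is_gen_def)

fun del_run :: "bool \<Rightarrow> nat \<Rightarrow> (nat \<times> nat) list \<Rightarrow> nat set \<Rightarrow> nat set option" where
  "del_run left n [] R = Some R"
| "del_run left n (p # w) R = Option.bind (del_run left n w R) (del_step left n p)"

lemma del_run_append:
  "del_run left n (u @ w) R = Option.bind (del_run left n w R) (del_run left n u)"
  by (induction u) simp_all

lemma del_run_square: "del_run left n [p, p] R = None"
  by (auto simp: del_step_def adjacent_in_def)

lemma adjacent_in_Diff:
  assumes kl: "adjacent_in n R (k, l)" and disj: "{i, j} \<inter> {k, l} = {}" and x: "x \<in> {k, l}"
  shows "adjacent_in n (R - {x}) (i, j) \<longleftrightarrow> adjacent_in n R (i, j)"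
proof
  assume "adjacent_in n R (i, j)" thus "adjacent_in n (R - {x}) (i, j)"
    using disj x by (auto simp: adjacent_in_def)
next
  assume ij: "adjacent_in n (R - {x}) (i, j)"
  have ijR: "i < j" "i \<in> R" "j \<in> R" using ij by (auto simp: adjacent_in_def is_gen_def)
  have klR: "k < l" "k \<in> R" "l \<in> R" "\<And>m. k < m \<Longrightarrow> m < l \<Longrightarrow> m \<notin> R"
    using kl by (auto simp: adjacent_in_def is_gen_def)
  have between: "m = x" if "i < m" "m < j" "m \<in> R" for m
    using ij that by (auto simp: adjacent_in_def)
  have "m \<notin> R" if m: "i < m" "m < j" for m
  proof
    assume "m \<in> R"
    hence "m = x" using between m by blast
    show False
    proof (cases "x = k")
      case True
      hence "\<not> (i < l \<and> l < j)" using between klR by blast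
      hence "j < l" using m \<open>m = x\<close> True klR(1) disj by auto
      thus False using klR(4)[of j] ijR m \<open>m = x\<close> True by auto
    next
      case False
      hence "x = l" using x by auto
      hence "\<not> (i < k \<and> k < j)" using between klR by blast
      hence "k < i" using m \<open>m = x\<close> \<open>x = l\<close> klR(1) disj by auto
      thus False using klR(4)[of i] ijR m \<open>m = x\<close> \<open>x = l\<close> by auto
    qed
  qed
  thus "adjacent_in n R (i, j)" using ij by (auto simp: adjacent_in_def)
qed

lemma del_run_disjoint_pair:
  assumes "{i, j} \<inter> {k, l} = {}"
  shows "del_run left n [(i, j), (k, l)] R =
    (if adjacent_in n R (i, j) \<and> adjacent_in n R (k, l)
     then Some (R - {if left then i else j, if left then k else l}) else None)"
proof (cases "adjacent_in n R (k, l)")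
  case True
  have "(if left then k else l) \<in> {k, l}" by simp
  from adjacent_in_Diff[OF True assms this] show ?thesis
    using True by (auto simp: del_step_def)
next
  case False thus ?thesis by (simp add: del_step_def)
qed

lemma del_run_commute:
  assumes "{i, j} \<inter> {k, l} = {}"
  shows "del_run left n [(i, j), (k, l)] R = del_run left n [(k, l), (i, j)] R"
proof -
  have "{k, l} \<inter> {i, j} = {}" using assms by auto
  thus ?thesis
    unfolding del_run_disjoint_pair[OF assms] del_run_disjoint_pair[OF \<open>{k, l} \<inter> {i, j} = {}\<close>]
    by (simp add: insert_commute conj_commute)
qed

definition tri_adjacent :: "nat \<Rightarrow> nat \<Rightarrow> nat \<Rightarrow> nat \<Rightarrow> nat set \<Rightarrow> bool" where
  "tri_adjacent n i j k R \<longleftrightarrow> adjacent_in n R (i, j) \<and> adjacent_in n R (j, k)"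

lemma adjacent_in_Diff_outside:
  "x < i \<or> j < x \<Longrightarrow> adjacent_in n (R - {x}) (i, j) \<longleftrightarrow> adjacent_in n R (i, j)"
  by (auto simp: adjacent_in_def is_gen_def)

lemma between_Diff_split:
  fixes i j k :: nat
  assumes "i < j" "j < k"
  shows "(\<forall>m. i < m \<and> m < k \<longrightarrow> m \<notin> R - {j}) \<longleftrightarrow>
    (\<forall>m. i < m \<and> m < j \<longrightarrow> m \<notin> R) \<and> (\<forall>m. j < m \<and> m < k \<longrightarrow> m \<notin> R)"
proof
  assume h: "\<forall>m. i < m \<and> m < k \<longrightarrow> m \<notin> R - {j}"
  show "(\<forall>m. i < m \<and> m < j \<longrightarrow> m \<notin> R) \<and> (\<forall>m. j < m \<and> m < k \<longrightarrow> m \<notin> R)"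
  proof (intro conjI allI impI)
    fix m assume "i < m \<and> m < j" thus "m \<notin> R" using h[rule_format, of m] assms by auto
  next
    fix m assume "j < m \<and> m < k" thus "m \<notin> R" using h[rule_format, of m] assms by auto
  qed
next
  assume h: "(\<forall>m. i < m \<and> m < j \<longrightarrow> m \<notin> R) \<and> (\<forall>m. j < m \<and> m < k \<longrightarrow> m \<notin> R)"
  show "\<forall>m. i < m \<and> m < k \<longrightarrow> m \<notin> R - {j}"
  proof (intro allI impI)
    fix m assume "i < m \<and> m < k"
    thus "m \<notin> R - {j}" using h by (cases m j rule: linorder_cases) auto
  qed
qed

lemma adjacent_in_Diff_middle:
  assumes "i < j" "j < k" "j \<in> R"
  shows "adjacent_in n (R - {j}) (i, k) \<longleftrightarrow> tri_adjacent n i j k R"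
proof -
  have "adjacent_in n (R - {j}) (i, k) \<longleftrightarrow>
      is_gen n (i, k) \<and> i \<in> R \<and> k \<in> R \<and> (\<forall>m. i < m \<and> m < k \<longrightarrow> m \<notin> R - {j})"
    using assms by (auto simp: adjacent_in_def)
  also have "\<dots> \<longleftrightarrow> tri_adjacent n i j k R"
    unfolding between_Diff_split[OF assms(1,2)] tri_adjacent_def adjacent_in_def is_gen_def
    using assms by auto
  finally show ?thesis .
qed

lemma del_run_tri1:
  assumes "i < j" "j < k"
  shows "del_run left n [(j, k), (i, k)] R = None"
    and "left \<Longrightarrow> del_run left n [(i, j), (j, k)] R = None"
    and "left \<Longrightarrow> del_run left n [(i, k), (i, j)] R = None"
    and "\<not> left \<Longrightarrow> del_run left n [(i, j), (j, k)] R = del_run left n [(i, k), (i, j)] R"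
proof -
  show "del_run left n [(j, k), (i, k)] R = None"
    and "left \<Longrightarrow> del_run left n [(i, j), (j, k)] R = None"
    and "left \<Longrightarrow> del_run left n [(i, k), (i, j)] R = None"
    using assms by (auto simp: del_step_def adjacent_in_def)
  assume "\<not> left"
  have "del_run left n [(i, j), (j, k)] R =
      (if tri_adjacent n i j k R then Some (R - {k} - {j}) else None)"
    using \<open>\<not> left\<close> adjacent_in_Diff_outside[of k i j n R] assms
    by (auto simp: del_step_def tri_adjacent_def)
  moreover have "del_run left n [(i, k), (i, j)] R =
      (if tri_adjacent n i j k R then Some (R - {j} - {k}) else None)"
    using \<open>\<not> left\<close> adjacent_in_Diff_middle[OF assms, of R n]
    by (auto simp: del_step_def tri_adjacent_def adjacent_in_def)
  moreover have "R - {k} - {j} = R - {j} - {k}" by blast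
  ultimately show "del_run left n [(i, j), (j, k)] R = del_run left n [(i, k), (i, j)] R"
    by simp
qed

lemma del_run_tri2:
  assumes "i < j" "j < k"
  shows "del_run left n [(i, j), (i, k)] R = None"
    and "\<not> left \<Longrightarrow> del_run left n [(j, k), (i, j)] R = None"
    and "\<not> left \<Longrightarrow> del_run left n [(i, k), (j, k)] R = None"
    and "left \<Longrightarrow> del_run left n [(j, k), (i, j)] R = del_run left n [(i, k), (j, k)] R"
proof -
  show "del_run left n [(i, j), (i, k)] R = None"
    and "\<not> left \<Longrightarrow> del_run left n [(j, k), (i, j)] R = None"
    and "\<not> left \<Longrightarrow> del_run left n [(i, k), (j, k)] R = None"
    using assms by (auto simp: del_step_def adjacent_in_def)
  assume left
  have "del_run left n [(j, k), (i, j)] R =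
      (if tri_adjacent n i j k R then Some (R - {i} - {j}) else None)"
    using \<open>left\<close> adjacent_in_Diff_outside[of i j k n R] assms
    by (auto simp: del_step_def tri_adjacent_def)
  moreover have "del_run left n [(i, k), (j, k)] R =
      (if tri_adjacent n i j k R then Some (R - {j} - {i}) else None)"
    using \<open>left\<close> adjacent_in_Diff_middle[OF assms, of R n]
    by (auto simp: del_step_def tri_adjacent_def adjacent_in_def)
  moreover have "R - {i} - {j} = R - {j} - {i}" by blast
  ultimately show "del_run left n [(j, k), (i, j)] R = del_run left n [(i, k), (j, k)] R"
    by simp
qed

lemma sum_monomial_mult:
  assumes "finite W"
  shows "(\<Sum>w\<in>W. mono u w * h w) = (if u \<in> W then h u else (0::'k::field))"
proof -
  have "(\<Sum>w\<in>W. mono u w * h w) = (\<Sum>w\<in>W. if w = u then h u else 0)"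
    by (intro sum.cong) (auto simp: mono_def)
  thus ?thesis using assms by simp
qed

lemma FK_rels_annihilate:
  fixes g :: "nat set option \<Rightarrow> 'k::field"
  assumes r: "r \<in> FK_rels n" and g: "g None = 0"
  shows "(\<Sum>w\<in>gen_words n t. r w * g (del_run left n w R)) = 0"
  using r
proof (induction rule: FK_rels.induct)
  case (sq i j)
  show ?case using g by (simp add: sum_monomial_mult finite_gen_words del_run_square del: del_run.simps)
next
  case (comm i j k l)
  have "[(i, j), (k, l)] \<in> gen_words n t \<longleftrightarrow> [(k, l), (i, j)] \<in> gen_words n t"
    by (auto simp: gen_words_def)
  thus ?case using del_run_commute[OF comm(3)]
    by (simp add: left_diff_distrib sum_subtractf sum_monomial_mult finite_gen_words del: del_run.simps)
next
  case (tri1 i j k)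
  have "w \<in> gen_words n t \<longleftrightarrow> t = 2"
    if "w \<in> {[(i, j), (j, k)], [(j, k), (i, k)], [(i, k), (i, j)]}" for w
    using tri1 that by (auto simp: gen_words_def is_gen_def)
  thus ?case using g del_run_tri1[OF tri1(2,3)]
    by (cases left) (simp_all add: left_diff_distrib sum_subtractf sum_monomial_mult finite_gen_words
        del: del_run.simps)
next
  case (tri2 i j k)
  have "w \<in> gen_words n t \<longleftrightarrow> t = 2"
    if "w \<in> {[(j, k), (i, j)], [(i, k), (j, k)], [(i, j), (i, k)]}" for w
    using tri2 that by (auto simp: gen_words_def is_gen_def)
  thus ?case using g del_run_tri2[OF tri2(2,3)]
    by (cases left) (simp_all add: left_diff_distrib sum_subtractf sum_monomial_mult finite_gen_words
        del: del_run.simps)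
qed

lemma sandwich_nonzero_infix:
  assumes "sandwich a r c w \<noteq> 0"
  shows "w \<in> range (\<lambda>m. a @ m @ c)"
proof -
  have h: "take (length a) w = a" "drop (length w - length c) w = c"
    "length a + length c \<le> length w"
    using assms by (auto simp: sandwich_def split: if_splits)
  define m where "m = take (length w - length a - length c) (drop (length a) w)"
  have "drop (length w - length a - length c) (drop (length a) w) = c"
    using h by simp
  hence "drop (length a) w = m @ c" unfolding m_def by (metis append_take_drop_id)
  hence "w = a @ m @ c" using h(1) by (metis append_take_drop_id)
  thus ?thesis by blast
qed

lemma sum_sandwich:
  "(\<Sum>w\<in>gen_words n t. sandwich a r c w * h w) =
     (\<Sum>m | a @ m @ c \<in> gen_words n t. r m * (h (a @ m @ c) :: 'k::field))"
proof -
  let ?F = "\<lambda>m. a @ m @ c"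
  have "(\<Sum>w\<in>gen_words n t. sandwich a r c w * h w) =
      (\<Sum>w\<in>gen_words n t \<inter> range ?F. sandwich a r c w * h w)"
  proof (rule sum.mono_neutral_right)
    show "\<forall>w\<in>gen_words n t - gen_words n t \<inter> range ?F. sandwich a r c w * h w = 0"
      using sandwich_nonzero_infix by (metis DiffE IntI mult_eq_0_iff)
  qed (simp_all add: finite_gen_words)
  also have "gen_words n t \<inter> range ?F = ?F ` {m. ?F m \<in> gen_words n t}" by blast
  also have "(\<Sum>w\<in>\<dots>. sandwich a r c w * h w) = (\<Sum>m | ?F m \<in> gen_words n t. r m * h (?F m))"
    by (subst sum.reindex) (simp_all add: inj_on_def sandwich_def)
  finally show ?thesis .
qed

lemma infix_gen_words_cases:
  "{m. a @ m @ c \<in> gen_words n t} = {} \<or>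
   {m. a @ m @ c \<in> gen_words n t} = gen_words n (t - length a - length c)"
proof (cases "set a \<subseteq> Collect (is_gen n) \<and> set c \<subseteq> Collect (is_gen n) \<and> length a + length c \<le> t")
  case True
  hence "{m. a @ m @ c \<in> gen_words n t} = gen_words n (t - length a - length c)"
    by (auto simp: gen_words_def)
  thus ?thesis ..
next
  case False
  hence "{m. a @ m @ c \<in> gen_words n t} = {}" by (auto simp: gen_words_def)
  thus ?thesis ..
qed

lemma FK_ideal_annihilate:
  fixes g :: "nat set option \<Rightarrow> 'k::field"
  assumes "f \<in> FK_ideal n" and "g None = 0"
  shows "(\<Sum>w\<in>gen_words n t. f w * g (del_run left n w R)) = 0"
  using assms
proof (induction arbitrary: t R g rule: FK_ideal.induct)
  case zero thus ?case by simp
next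
  case (add f1 f2) thus ?case by (simp add: distrib_right sum.distrib)
next
  case (smult f c) thus ?case by (simp add: sum_distrib_left[symmetric] mult.assoc)
next
  case (gen r a c)
  show ?case
  proof (cases "del_run left n c R")
    case None
    thus ?thesis using gen.prems by (simp add: sum_sandwich del_run_append del: del_run.simps)
  next
    case (Some R')
    \<comment> \<open>the run of \<open>a @ m @ c\<close> is the run of \<open>m\<close> from \<open>R'\<close>, followed by the run of \<open>a\<close>\<close>
    define g' where "g' x = g (Option.bind x (del_run left n a))" for x
    have "g (del_run left n (a @ m @ c) R) = g' (del_run left n m R')" for m
      using Some by (simp add: g'_def del_run_append del: del_run.simps)
    moreover have "g' None = 0" using gen.prems by (simp add: g'_def)
    ultimately show ?thesis
      using infix_gen_words_cases[of a c n t] FK_rels_annihilate[OF gen.hyps, of g']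
      by (auto simp: sum_sandwich)
  qed
qed

lemma del_run_decreasing_word:
  "1 \<le> c \<Longrightarrow> c + t \<le> n \<Longrightarrow>
   del_run True n (map edgeA (rev [c..<c+t])) {1..n} = Some ({1..n} - {c..<c+t})"
proof (induction t)
  case (Suc t)
  have "rev [c..<c + Suc t] = (c + t) # rev [c..<c+t]" by simp
  moreover have "{1..n} - {c..<c+t} - {c+t} = {1..n} - {c..<c + Suc t}" by auto
  ultimately show ?case
    using Suc by (simp only: list.map del_run.simps) (auto simp: del_step_edge edgeA_def)
qed simp

lemma del_run_increasing_word:
  "1 \<le> c \<Longrightarrow> c + t \<le> n \<Longrightarrow>
   del_run False n (map edgeA [c..<c+t]) {1..n} = Some ({1..n} - {c+1..<c+t+1})"
proof (induction t arbitrary: c)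
  case (Suc t)
  have "[c..<c + Suc t] = c # [Suc c..<Suc c + t]" by (simp add: upt_conv_Cons)
  moreover have "del_run False n (map edgeA [Suc c..<Suc c + t]) {1..n} =
      Some ({1..n} - {Suc c + 1..<Suc c + t + 1})"
    by (rule Suc.IH) (use Suc.prems in auto)
  moreover have "{1..n} - {Suc c + 1..<Suc c + t + 1} - {c+1} = {1..n} - {c+1..<c + Suc t + 1}"
    by auto
  ultimately show ?case
    using Suc.prems by (simp only: list.map del_run.simps) (auto simp: del_step_edge edgeA_def)
qed simp

lemma del_run_decreasing_word_unique:
  assumes "set w \<subseteq> edgeA ` {1..<n}" "length w = t" "1 \<le> c" "c + t \<le> n"
    and "del_run True n w {1..n} = Some ({1..n} - {c..<c+t})"
  shows "w = map edgeA (rev [c..<c+t])"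
  using assms
proof (induction t arbitrary: w)
  case (Suc t)
  then obtain a w' where w: "w = edgeA a # w'" "1 \<le> a" "a < n"
    by (cases w) auto
  from Suc.prems(5) obtain R where R: "del_run True n w' {1..n} = Some R"
    and step: "del_step True n (a, a + 1) R = Some ({1..n} - {c..<c + Suc t})"
    by (auto simp: w edgeA_def bind_eq_Some_conv)
  have adj: "adjacent_in n R (a, a + 1)" and R_a: "R - {a} = {1..n} - {c..<c + Suc t}"
    using step by (simp_all add: del_step_def split: if_split_asm)
  from adj have "a \<in> R" "a + 1 \<in> R" by (simp_all add: adjacent_in_def)
  have "a \<notin> R - {a}" by simp
  hence "a \<notin> {1..n} - {c..<c + Suc t}" unfolding R_a .
  moreover have "a + 1 \<in> R - {a}" using \<open>a + 1 \<in> R\<close> by simp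
  hence "a + 1 \<in> {1..n} - {c..<c + Suc t}" unfolding R_a .
  ultimately have "a = c + t" using w(2,3) by auto
  have "R = insert a (R - {a})" using \<open>a \<in> R\<close> by auto
  also have "\<dots> = {1..n} - {c..<c+t}" unfolding R_a using \<open>a = c + t\<close> Suc.prems(3,4) by auto
  finally have "R = {1..n} - {c..<c+t}" .
  hence "w' = map edgeA (rev [c..<c+t])"
    using Suc.IH[of w'] Suc.prems w R by auto
  thus ?case using w \<open>a = c + t\<close> by simp
qed simp

lemma del_run_increasing_word_unique:
  assumes "set w \<subseteq> edgeA ` {1..<n}" "length w = t" "1 \<le> c" "c + t \<le> n"
    and "del_run False n w {1..n} = Some ({1..n} - {c+1..<c+t+1})"
  shows "w = map edgeA [c..<c+t]"
  using assms
proof (induction t arbitrary: w c)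
  case (Suc t)
  then obtain a w' where w: "w = edgeA a # w'" "1 \<le> a" "a < n"
    by (cases w) auto
  from Suc.prems(5) obtain R where R: "del_run False n w' {1..n} = Some R"
    and step: "del_step False n (a, a + 1) R = Some ({1..n} - {c+1..<c + Suc t + 1})"
    by (auto simp: w edgeA_def bind_eq_Some_conv)
  have adj: "adjacent_in n R (a, a + 1)" and R_a: "R - {a+1} = {1..n} - {c+1..<c + Suc t + 1}"
    using step by (simp_all add: del_step_def split: if_split_asm)
  from adj have "a \<in> R" "a + 1 \<in> R" by (simp_all add: adjacent_in_def)
  have "a + 1 \<notin> R - {a+1}" by simp
  hence "a + 1 \<notin> {1..n} - {c+1..<c + Suc t + 1}" unfolding R_a .
  moreover have "a \<in> R - {a+1}" using \<open>a \<in> R\<close> by simp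
  hence "a \<in> {1..n} - {c+1..<c + Suc t + 1}" unfolding R_a .
  ultimately have "a = c" using w(2,3) by auto
  have "R = insert (a+1) (R - {a+1})" using \<open>a + 1 \<in> R\<close> by auto
  also have "\<dots> = {1..n} - {Suc c + 1..<Suc c + t + 1}"
    unfolding R_a using \<open>a = c\<close> Suc.prems(3,4) by auto
  finally have "w' = map edgeA [Suc c..<Suc c + t]"
    using Suc.IH[of w' "Suc c"] Suc.prems w R by auto
  moreover have "[c..<c + Suc t] = c # [Suc c..<Suc c + t]" by (simp add: upt_conv_Cons)
  ultimately show ?case using w \<open>a = c\<close> by (simp del: upt_Suc)
qed simp

lemma An_rel_support:
  "An_rel n t f \<Longrightarrow> f w \<noteq> 0 \<Longrightarrow> length w = t \<and> set w \<subseteq> edgeA ` {1..<n}"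
  by (fastforce simp: An_rel_def)

lemma An_rel_coeff_unique_run:
  fixes f :: "((nat \<times> nat), 'k::field) ncpoly"
  assumes f: "An_rel n t f"
    and u: "length u = t" "set u \<subseteq> edgeA ` {1..<n}" "del_run left n u {1..n} = Some T"
    and unique: "\<And>w. set w \<subseteq> edgeA ` {1..<n} \<Longrightarrow> length w = t \<Longrightarrow>
                      del_run left n w {1..n} = Some T \<Longrightarrow> w = u"
  shows "f u = 0"
proof -
  \<comment> \<open>pairing \<open>f\<close> with the indicator of \<open>T\<close> isolates the coefficient of \<open>u\<close>\<close>
  define g :: "nat set option \<Rightarrow> 'k" where "g x = (if x = Some T then 1 else 0)" for x
  have "f w * g (del_run left n w {1..n}) = (if w = u then f u else 0)" for w
    using An_rel_support[OF f, of w] unique u(3) by (auto simp: g_def)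
  moreover have "u \<in> gen_words n t"
    using u(1,2) by (auto simp: gen_words_def is_gen_def edgeA_def)
  moreover have "(\<Sum>w\<in>gen_words n t. f w * g (del_run left n w {1..n})) = 0"
    using f by (intro FK_ideal_annihilate) (simp_all add: An_rel_def g_def)
  ultimately show ?thesis by (simp add: finite_gen_words)
qed

lemma An_rel_coeff_decreasing_word:
  assumes "An_rel n t f" "1 \<le> c" "c + t \<le> n"
  shows "f (map edgeA (rev [c..<c+t])) = 0"
  using assms del_run_decreasing_word del_run_decreasing_word_unique
  by (intro An_rel_coeff_unique_run[where left=True and T="{1..n} - {c..<c+t}"]) auto

lemma An_rel_coeff_increasing_word:
  assumes "An_rel n t f" "1 \<le> c" "c + t \<le> n"
  shows "f (map edgeA [c..<c+t]) = 0"
  using assms del_run_increasing_word del_run_increasing_word_unique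
  by (intro An_rel_coeff_unique_run[where left=False and T="{1..n} - {c+1..<c+t+1}"]) auto

section \<open>Relations of \<open>E\<^sub>A\<^sub>n\<close>\<close>

lemma sandwich_Nil: "sandwich [] r [] = r"
  by (simp add: sandwich_def fun_eq_iff)

lemma sandwich_mono: "sandwich a (mono u :: ('l, 'k::field) ncpoly) c = mono (a @ u @ c)"
proof
  fix w
  show "sandwich a (mono u :: ('l, 'k) ncpoly) c w = mono (a @ u @ c) w"
  proof (cases "w \<in> range (\<lambda>m. a @ m @ c)")
    case True
    then obtain m where "w = a @ m @ c" by blast
    thus ?thesis by (simp add: sandwich_def mono_def)
  next
    case False
    thus ?thesis using sandwich_nonzero_infix[of a "mono u" c w] by (auto simp: mono_def)
  qed
qed

lemma sandwich_diff:
  "sandwich a (\<lambda>w. f w - g w) c = (\<lambda>w. sandwich a f c w - sandwich a g c w)"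
  by (simp add: sandwich_def fun_eq_iff)

lemma FK_rels_in_ideal: "r \<in> FK_rels n \<Longrightarrow> r \<in> FK_ideal n"
  using FK_ideal.gen[of r n "[]" "[]"] by (simp add: sandwich_Nil)

lemma An_relI:
  assumes "f \<in> FK_ideal n" "\<And>w. f w \<noteq> 0 \<Longrightarrow> length w = t \<and> set w \<subseteq> edgeA ` {1..<n}"
  shows "An_rel n t f"
  using assms by (fastforce simp: An_rel_def)

lemma An_rel_square:
  assumes "1 \<le> a" "a < n"
  shows "An_rel n 2 (mono (map edgeA [a, a]) :: ((nat \<times> nat), 'k::field) ncpoly)"
proof (rule An_relI)
  have "mono (map edgeA [a, a]) \<in> (FK_rels n :: ((nat \<times> nat), 'k) ncpoly set)"
    using assms by (simp add: edgeA_def FK_rels.sq)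
  thus "mono (map edgeA [a, a]) \<in> (FK_ideal n :: ((nat \<times> nat), 'k) ncpoly set)"
    by (rule FK_rels_in_ideal)
qed (use assms in \<open>auto simp: mono_def split: if_splits\<close>)

lemma An_rel_commute:
  assumes "1 \<le> a" "a + 2 \<le> b" "b < n"
  shows "An_rel n 2 ((\<lambda>w. mono (map edgeA [a, b]) w - mono (map edgeA [b, a]) w)
           :: ((nat \<times> nat), 'k::field) ncpoly)"
proof (rule An_relI)
  have "(\<lambda>w. mono (map edgeA [a, b]) w - mono (map edgeA [b, a]) w)
      \<in> (FK_rels n :: ((nat \<times> nat), 'k) ncpoly set)"
    using assms by (simp add: edgeA_def is_gen_def FK_rels.comm)
  thus "(\<lambda>w. mono (map edgeA [a, b]) w - mono (map edgeA [b, a]) w)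
      \<in> (FK_ideal n :: ((nat \<times> nat), 'k) ncpoly set)"
    by (rule FK_rels_in_ideal)
qed (use assms in \<open>auto simp: mono_def split: if_splits\<close>)

lemma An_rel_braid:
  assumes "1 \<le> a" "a + 2 \<le> n"
  shows "An_rel n 3 ((\<lambda>w. mono (map edgeA [a, a + 1, a]) w - mono (map edgeA [a + 1, a, a + 1]) w)
           :: ((nat \<times> nat), 'k::field) ncpoly)"
proof (rule An_relI)
  define P Q S where "P = (a, a + 1)" and "Q = (a + 1, a + 2)" and "S = (a, a + 2)"
  define T :: "((nat \<times> nat), 'k) ncpoly" where
    "T = (\<lambda>w. mono [P, Q] w - mono [Q, S] w - mono [S, P] w)"
  have rels: "T \<in> FK_rels n" "mono [P, P] \<in> FK_rels n" "mono [Q, Q] \<in> FK_rels n"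
    unfolding T_def P_def Q_def S_def using assms FK_rels.tri1[of a "a + 1" "a + 2" n]
    by (simp_all add: FK_rels.sq)
  \<comment> \<open>\<open>P Q P - Q P Q = T P + S P\<^sup>2 - Q T - Q\<^sup>2 S\<close>\<close>
  have "(\<lambda>w. (sandwich [] T [P] w + sandwich [S] (mono [P, P]) [] w)
           + (-1) * (sandwich [Q] T [] w + sandwich [] (mono [Q, Q]) [S] w)) \<in> FK_ideal n"
    by (intro FK_ideal.add FK_ideal.smult FK_ideal.gen rels)
  moreover have "(\<lambda>w. (sandwich [] T [P] w + sandwich [S] (mono [P, P]) [] w)
           + (-1) * (sandwich [Q] T [] w + sandwich [] (mono [Q, Q]) [S] w))
      = (\<lambda>w. mono [P, Q, P] w - mono [Q, P, Q] w)"
    unfolding T_def sandwich_diff sandwich_mono by (simp add: fun_eq_iff algebra_simps)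
  ultimately show "(\<lambda>w. mono (map edgeA [a, a + 1, a]) w - mono (map edgeA [a + 1, a, a + 1]) w)
      \<in> (FK_ideal n :: ((nat \<times> nat), 'k) ncpoly set)"
    by (simp add: P_def Q_def edgeA_def)
qed (use assms in \<open>auto simp: mono_def split: if_splits\<close>)

section \<open>Points of \<open>P\<^sub>d(E\<^sub>A\<^sub>n)\<close>\<close>

definition index_words :: "nat \<Rightarrow> nat \<Rightarrow> nat list set" where
  "index_words n t = {u. length u = t \<and> set u \<subseteq> {1..n - 1}}"

definition word_eval :: "(nat \<Rightarrow> nat \<Rightarrow> 'k::field) \<Rightarrow> nat \<Rightarrow> nat \<Rightarrow> nat list \<Rightarrow> 'k" where
  "word_eval v s t u = (\<Prod>j<t. v (s + t - 1 - j) (u ! j))"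

definition satisfies_rels :: "'k itself \<Rightarrow> nat \<Rightarrow> nat \<Rightarrow> (nat \<Rightarrow> nat \<Rightarrow> 'k::field) \<Rightarrow> bool" where
  "satisfies_rels _ n d v \<longleftrightarrow> (\<forall>(f :: ((nat \<times> nat), 'k) ncpoly) t s. An_rel n t f \<and> s + t \<le> d \<longrightarrow>
      (\<Sum>u\<in>index_words n t. f (map edgeA u) * word_eval v s t u) = 0)"

definition proj_tuple :: "nat \<Rightarrow> (nat \<Rightarrow> nat \<Rightarrow> 'k::field) \<Rightarrow> nat \<Rightarrow> (nat \<Rightarrow> 'k) set" where
  "proj_tuple d v = (\<lambda>j. if j < d then ppt (v j) else {})"

lemma Pd_An_iff:
  "z \<in> Pd_An TYPE('k::field) n d \<longleftrightarrow>
     (\<exists>v. z = proj_tuple d v \<and> (\<forall>j<d. v j \<in> vecs (n - 1)) \<and> satisfies_rels TYPE('k) n d v)"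
  unfolding Pd_An_def satisfies_rels_def proj_tuple_def index_words_def word_eval_def by blast

lemma finite_index_words: "finite (index_words n t)"
  unfolding index_words_def using finite_lists_length_eq[of "{1..n - 1}" t]
  by (simp add: conj_commute)

lemma sum_index_words_monomial:
  assumes "u \<in> index_words n t"
  shows "(\<Sum>u'\<in>index_words n t. mono (map edgeA u) (map edgeA u') * h u') = (h u :: 'k::field)"
proof -
  have "inj edgeA" by (auto simp: inj_on_def edgeA_def)
  hence "(\<Sum>u'\<in>index_words n t. mono (map edgeA u) (map edgeA u') * h u') =
      (\<Sum>u'\<in>index_words n t. if u' = u then h u else 0)"
    by (intro sum.cong) (auto simp: mono_def)
  thus ?thesis using assms by (simp add: finite_index_words)
qed

lemma word_eval_2: "word_eval v s 2 [x, y] = v (s + 1) x * v s y"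
  by (simp add: word_eval_def numeral_2_eq_2)

lemma word_eval_3: "word_eval v s 3 [x, y, z] = v (s + 2) x * v (s + 1) y * v s z"
  by (simp add: word_eval_def numeral_3_eq_3 mult.assoc)

lemma satisfies_rels_monomial:
  assumes "satisfies_rels TYPE('k::field) n d v" "s + t \<le> d" "u \<in> index_words n t"
    and "An_rel n t (mono (map edgeA u) :: ((nat \<times> nat), 'k) ncpoly)"
  shows "word_eval v s t u = 0"
  using assms sum_index_words_monomial[OF assms(3), of "word_eval v s t"]
  unfolding satisfies_rels_def by metis

lemma satisfies_rels_binomial:
  assumes "satisfies_rels TYPE('k::field) n d v" "s + t \<le> d"
    and "u \<in> index_words n t" "u' \<in> index_words n t"
    and "An_rel n t ((\<lambda>w. mono (map edgeA u) w - mono (map edgeA u') w) :: ((nat \<times> nat), 'k) ncpoly)"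
  shows "word_eval v s t u = word_eval v s t u'"
proof -
  have "(\<Sum>w\<in>index_words n t. (mono (map edgeA u) (map edgeA w) - mono (map edgeA u') (map edgeA w))
      * word_eval v s t w) = 0"
    using assms(1,2,5) unfolding satisfies_rels_def by blast
  thus ?thesis
    using sum_index_words_monomial[OF assms(3), of "word_eval v s t"]
      sum_index_words_monomial[OF assms(4), of "word_eval v s t"]
    by (simp add: left_diff_distrib sum_subtractf)
qed

lemma vecs_support: "w \<in> vecs m \<Longrightarrow> w i \<noteq> 0 \<Longrightarrow> 1 \<le> i \<and> i \<le> m"
  by (auto simp: vecs_def)

lemma vecs_tuple_zero: "\<forall>j<d. v j \<in> vecs m \<Longrightarrow> j < d \<Longrightarrow> i = 0 \<or> m < i \<Longrightarrow> v j i = 0"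
  by (meson vecs_support not_le less_one)

lemma vecs_nonzero: "w \<in> vecs m \<Longrightarrow> \<exists>i. w i \<noteq> 0"
  by (auto simp: vecs_def)

text \<open>The next three lemmas hold for all indices: outside \<open>{1..n-1}\<close> both sides vanish.\<close>

lemma point_square:
  assumes P: "satisfies_rels TYPE('k::field) n d v" and V: "\<forall>j<d. v j \<in> vecs (n - 1)"
    and "s + 2 \<le> d"
  shows "v (s + 1) a * v s a = 0"
proof (cases "1 \<le> a \<and> a < n")
  case True
  have "[a, a] \<in> index_words n 2" using True by (auto simp: index_words_def)
  thus ?thesis
    using satisfies_rels_monomial[OF P \<open>s + 2 \<le> d\<close> _ An_rel_square[of a n]] True
    by (simp add: word_eval_2)
next
  case False
  hence "v s a = 0" using vecs_tuple_zero[OF V, of s a] \<open>s + 2 \<le> d\<close> by linarith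
  thus ?thesis by simp
qed

lemma point_commute:
  assumes P: "satisfies_rels TYPE('k::field) n d v" and V: "\<forall>j<d. v j \<in> vecs (n - 1)"
    and "s + 2 \<le> d" "a + 2 \<le> b"
  shows "v (s + 1) a * v s b = v (s + 1) b * v s a"
proof (cases "1 \<le> a \<and> b < n")
  case True
  have "[a, b] \<in> index_words n 2" "[b, a] \<in> index_words n 2"
    using True \<open>a + 2 \<le> b\<close> by (auto simp: index_words_def)
  thus ?thesis
    using satisfies_rels_binomial[OF P \<open>s + 2 \<le> d\<close> _ _ An_rel_commute[of a b n]] True \<open>a + 2 \<le> b\<close>
    by (simp add: word_eval_2)
next
  case False
  have "s < d" "s + 1 < d" using \<open>s + 2 \<le> d\<close> by simp_all
  note zero = vecs_tuple_zero[OF V \<open>s < d\<close>] vecs_tuple_zero[OF V \<open>s + 1 < d\<close>, simplified]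
  consider "a = 0" | "n - 1 < b" using False \<open>a + 2 \<le> b\<close> by linarith
  thus ?thesis by cases (simp_all add: zero)
qed

lemma point_braid:
  assumes P: "satisfies_rels TYPE('k::field) n d v" and V: "\<forall>j<d. v j \<in> vecs (n - 1)"
    and "s + 3 \<le> d"
  shows "v (s + 2) a * v (s + 1) (a + 1) * v s a = v (s + 2) (a + 1) * v (s + 1) a * v s (a + 1)"
proof (cases "1 \<le> a \<and> a + 2 \<le> n")
  case True
  have "[a, a + 1, a] \<in> index_words n 3" "[a + 1, a, a + 1] \<in> index_words n 3"
    using True by (auto simp: index_words_def)
  thus ?thesis
    using satisfies_rels_binomial[OF P \<open>s + 3 \<le> d\<close> _ _ An_rel_braid[of a n]] True
    by (simp add: word_eval_3)
next
  case False
  have "s < d" "s + 1 < d" using \<open>s + 3 \<le> d\<close> by simp_all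
  note zero = vecs_tuple_zero[OF V \<open>s < d\<close>] vecs_tuple_zero[OF V \<open>s + 1 < d\<close>, simplified]
  consider "a = 0" | "n - 1 < a + 1" using False by linarith
  thus ?thesis by cases (simp_all add: zero)
qed

lemma An_rel_coeff_monotone:
  assumes f: "An_rel n t f" and "1 \<le> n" and u: "u \<in> index_words n t"
    and mono: "u = rev [c..<c+t] \<or> u = [c..<c+t]"
  shows "f (map edgeA u) = 0"
proof (cases "t = 0")
  case True
  hence "u = [1..<1+t]" using u by (simp add: index_words_def)
  thus ?thesis using An_rel_coeff_increasing_word[OF f] \<open>1 \<le> n\<close> True by simp
next
  case False
  hence "c \<in> set u" "c + t - 1 \<in> set u" using mono by auto
  hence "c \<in> {1..n - 1}" "c + t - 1 \<in> {1..n - 1}" using u by (auto simp: index_words_def)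
  hence "1 \<le> c" "c + t \<le> n" using False by auto
  thus ?thesis
    using mono An_rel_coeff_increasing_word[OF f] An_rel_coeff_decreasing_word[OF f] by auto
qed

lemma proj_tuple_in_Pd_An:
  fixes v :: "nat \<Rightarrow> nat \<Rightarrow> 'k::field"
  assumes V: "\<forall>j<d. v j \<in> vecs (n - 1)" and "1 \<le> n"
    and monotone: "\<And>s t u. s + t \<le> d \<Longrightarrow> 2 \<le> t \<Longrightarrow> u \<in> index_words n t \<Longrightarrow>
                     word_eval v s t u \<noteq> 0 \<Longrightarrow> \<exists>c. u = rev [c..<c+t] \<or> u = [c..<c+t]"
  shows "proj_tuple d v \<in> Pd_An TYPE('k) n d"
  unfolding Pd_An_iff
proof (intro exI conjI)
  show "satisfies_rels TYPE('k) n d v"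
    unfolding satisfies_rels_def
  proof (intro allI impI, elim conjE)
    fix f :: "((nat \<times> nat), 'k) ncpoly" and t s
    assume f: "An_rel n t f" and "s + t \<le> d"
    have "f (map edgeA u) * word_eval v s t u = 0" if u: "u \<in> index_words n t" for u
    proof (cases "word_eval v s t u = 0")
      case False
      have "\<exists>c. u = rev [c..<c+t] \<or> u = [c..<c+t]"
      proof (cases "2 \<le> t")
        case True thus ?thesis using monotone \<open>s + t \<le> d\<close> u False by blast
      next
        case False
        hence "t = 0 \<or> t = 1" by auto
        thus ?thesis using u by (auto simp: index_words_def length_Suc_conv)
      qed
      thus ?thesis using An_rel_coeff_monotone[OF f \<open>1 \<le> n\<close> u] by auto
    qed simp
    thus "(\<Sum>u\<in>index_words n t. f (map edgeA u) * word_eval v s t u) = 0"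
      by (simp add: sum.neutral)
  qed
qed (use V in auto)

definition basis_vec :: "nat \<Rightarrow> nat \<Rightarrow> 'k::field" where
  "basis_vec i = (\<lambda>k. if k = i then 1 else 0)"

definition supported_at :: "(nat \<Rightarrow> 'k::zero) \<Rightarrow> nat \<Rightarrow> bool" where
  "supported_at w x \<longleftrightarrow> (\<forall>i. w i \<noteq> 0 \<longleftrightarrow> i = x)"

lemma basis_vec_in_vecs: "1 \<le> i \<Longrightarrow> i \<le> m \<Longrightarrow> basis_vec i \<in> vecs m"
  by (auto simp: basis_vec_def vecs_def)

lemma supported_at_unique: "supported_at w a \<Longrightarrow> supported_at w b \<Longrightarrow> a = b"
  unfolding supported_at_def by metis

lemma supported_atI: "w x \<noteq> 0 \<Longrightarrow> (\<And>i. w i \<noteq> 0 \<Longrightarrow> i = x) \<Longrightarrow> supported_at w x"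
  unfolding supported_at_def by metis

lemma ppt_scale:
  assumes "c \<noteq> (0::'k::field)"
  shows "ppt (\<lambda>i. c * w i) = ppt w"
proof -
  have "(\<lambda>i. c' * (c * w i)) = (\<lambda>i. (c' * c) * w i)" for c' by (simp add: mult.assoc)
  moreover have "(\<lambda>i. c' * w i) = (\<lambda>i. (c' / c) * (c * w i))" for c' using assms by simp
  ultimately show ?thesis using assms unfolding ppt_def by (metis divide_eq_0_iff mult_eq_0_iff)
qed

lemma ppt_eqD: "ppt u = ppt w \<Longrightarrow> \<exists>c. c \<noteq> (0::'k::field) \<and> w = (\<lambda>i. c * u i)"
proof -
  assume "ppt u = ppt w"
  moreover have "w \<in> ppt w" unfolding ppt_def by (rule CollectI, rule exI[of _ 1]) simp
  ultimately show ?thesis by (auto simp: ppt_def)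
qed

lemma ppt_basis_vec_eq_iff: "ppt (basis_vec a :: nat \<Rightarrow> 'k::field) = ppt (basis_vec b) \<longleftrightarrow> a = b"
proof
  assume "ppt (basis_vec a :: nat \<Rightarrow> 'k) = ppt (basis_vec b)"
  then obtain c :: 'k where "c \<noteq> 0" "basis_vec b = (\<lambda>i. c * basis_vec a i)" using ppt_eqD by blast
  hence "basis_vec b b = c * (basis_vec a b :: 'k)" by metis
  thus "a = b" by (auto simp: basis_vec_def split: if_splits)
qed simp

lemma supported_at_ppt: "supported_at w x \<Longrightarrow> ppt w = ppt (basis_vec x :: nat \<Rightarrow> 'k::field)"
proof -
  assume a: "supported_at w x"
  hence "w = (\<lambda>i. w x * basis_vec x i)" "w x \<noteq> 0"
    by (auto simp: supported_at_def basis_vec_def fun_eq_iff)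
  thus ?thesis by (metis ppt_scale)
qed

lemma proj_tuple_cong: "(\<And>j. j < d \<Longrightarrow> ppt (v j) = ppt (w j)) \<Longrightarrow> proj_tuple d v = proj_tuple d w"
  by (simp add: proj_tuple_def fun_eq_iff)

lemma proj_tuple_2_cong:
  assumes "ppt (v 0) = ppt (w 0)" "ppt (v 1) = ppt (w 1)"
  shows "proj_tuple 2 v = proj_tuple 2 w"
proof (rule proj_tuple_cong)
  fix j :: nat assume "j < 2"
  hence "j = 0 \<or> j = 1" by auto
  thus "ppt (v j) = ppt (w j)" using assms by auto
qed

lemma proj_tuple_eqD: "proj_tuple d v = proj_tuple d w \<Longrightarrow> j < d \<Longrightarrow> ppt (v j) = ppt (w j)"
  by (metis proj_tuple_def)

lemma word_eval_nonzero:
  "word_eval v s t u \<noteq> 0 \<Longrightarrow> j < t \<Longrightarrow> v (s + t - 1 - j) (u ! j) \<noteq> (0::'k::field)"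
  unfolding word_eval_def by auto

section \<open>Points of degree at least three\<close>

definition inc_point :: "nat \<Rightarrow> nat \<Rightarrow> nat \<Rightarrow> (nat \<Rightarrow> 'k::field) set" where
  "inc_point d a = proj_tuple d (\<lambda>j. basis_vec (a + j))"

definition dec_point :: "nat \<Rightarrow> nat \<Rightarrow> nat \<Rightarrow> (nat \<Rightarrow> 'k::field) set" where
  "dec_point d b = proj_tuple d (\<lambda>j. basis_vec (b - j))"

lemma inc_point_in_Pd_An:
  assumes "1 \<le> a" "a + d \<le> n"
  shows "inc_point d a \<in> Pd_An TYPE('k::field) n d"
  unfolding inc_point_def
proof (rule proj_tuple_in_Pd_An)
  fix s t u assume "s + t \<le> d" "u \<in> index_words n t"
    and nz: "word_eval (\<lambda>j. basis_vec (a + j) :: nat \<Rightarrow> 'k) s t u \<noteq> 0"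
  have "u ! j = a + (s + t - 1 - j)" if "j < t" for j
    using word_eval_nonzero[OF nz that] by (auto simp: basis_vec_def split: if_splits)
  hence "u = rev [a + s..<a + s + t]" using \<open>u \<in> index_words n t\<close>
    by (intro nth_equalityI) (auto simp: index_words_def rev_nth)
  thus "\<exists>c. u = rev [c..<c+t] \<or> u = [c..<c+t]" by auto
qed (use assms in \<open>auto intro: basis_vec_in_vecs\<close>)

lemma dec_point_in_Pd_An:
  assumes "d \<le> b" "b < n"
  shows "dec_point d b \<in> Pd_An TYPE('k::field) n d"
  unfolding dec_point_def
proof (rule proj_tuple_in_Pd_An)
  fix s t u assume "s + t \<le> d" "u \<in> index_words n t"
    and nz: "word_eval (\<lambda>j. basis_vec (b - j) :: nat \<Rightarrow> 'k) s t u \<noteq> 0"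
  have "u ! j = b - (s + t - 1 - j)" if "j < t" for j
    using word_eval_nonzero[OF nz that] by (auto simp: basis_vec_def split: if_splits)
  hence "u = [b - (s + t - 1)..<b - (s + t - 1) + t]"
    using \<open>u \<in> index_words n t\<close> \<open>s + t \<le> d\<close> assms
    by (intro nth_equalityI) (auto simp: index_words_def)
  thus "\<exists>c. u = rev [c..<c+t] \<or> u = [c..<c+t]" by auto
qed (use assms in \<open>auto intro: basis_vec_in_vecs\<close>)

lemma nonzero_entries_adjacent:
  fixes p q :: "nat \<Rightarrow> 'k::field"
  assumes square: "\<And>a. q a * p a = 0"
    and commute: "\<And>a b. a + 2 \<le> b \<Longrightarrow> q a * p b = q b * p a"
    and "p x \<noteq> 0" "q y \<noteq> 0"
  shows "y = x + 1 \<or> x = y + 1"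
proof -
  have "x \<noteq> y" using square[of x] assms(3,4) by auto
  moreover have "\<not> x + 2 \<le> y"
    using commute[of x y] square[of y] assms(3,4) by auto
  moreover have "\<not> y + 2 \<le> x"
    using commute[of y x] square[of x] assms(3,4) by auto
  ultimately show ?thesis by linarith
qed

lemma point_entries_adjacent:
  assumes "satisfies_rels TYPE('k::field) n d v" "\<forall>j<d. v j \<in> vecs (n - 1)" "s + 2 \<le> d"
    and "v s x \<noteq> 0" "v (s + 1) y \<noteq> 0"
  shows "y = x + 1 \<or> x = y + 1"
  using nonzero_entries_adjacent[of "v (s + 1)" "v s"] point_square[OF assms(1-3)]
    point_commute[OF assms(1-3)] assms(4,5) by blast

lemma braid_supports_disjoint:
  fixes p q r :: "nat \<Rightarrow> 'k::field"
  assumes pq: "\<And>x y. p x \<noteq> 0 \<Longrightarrow> q y \<noteq> 0 \<Longrightarrow> y = x + 1 \<or> x = y + 1"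
    and braid: "\<And>a. r a * q (a + 1) * p a = r (a + 1) * q a * p (a + 1)"
    and qy: "q y \<noteq> 0"
  shows "r i * p i = 0"
proof (rule ccontr)
  assume "r i * p i \<noteq> 0"
  moreover have "p y = 0" using pq[of y y] qy by auto
  moreover from pq[of i y] qy \<open>r i * p i \<noteq> 0\<close> have "y = i + 1 \<or> i = y + 1" by auto
  ultimately show False using braid[of i] braid[of y] qy by auto
qed

lemma three_supports_monotone:
  fixes p q r :: "nat \<Rightarrow> 'k::field"
  assumes pq: "\<And>x y. p x \<noteq> 0 \<Longrightarrow> q y \<noteq> 0 \<Longrightarrow> y = x + 1 \<or> x = y + 1"
    and qr: "\<And>y z. q y \<noteq> 0 \<Longrightarrow> r z \<noteq> 0 \<Longrightarrow> z = y + 1 \<or> y = z + 1"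
    and braid: "\<And>a. r a * q (a + 1) * p a = r (a + 1) * q a * p (a + 1)"
    and px: "p x \<noteq> 0" and qy: "q y \<noteq> 0" and rz: "r z \<noteq> 0"
  shows "\<exists>c. (supported_at p c \<and> supported_at q (c + 1) \<and> supported_at r (c + 2)) \<or>
             (supported_at p (c + 2) \<and> supported_at q (c + 1) \<and> supported_at r c)"
proof -
  have rp: "r i * p i = 0" for i using braid_supports_disjoint[OF pq braid qy] .
  hence "x \<noteq> z" using px rz by (metis mult_eq_0_iff)
  hence xyz: "(y = x + 1 \<and> z = y + 1) \<or> (x = y + 1 \<and> y = z + 1)"
    using pq[OF px qy] qr[OF qy rz] by auto
  have p: "supported_at p x"
  proof (rule supported_atI[of p x, OF px])
    fix i assume "p i \<noteq> 0"
    moreover have "i \<noteq> z" using rp[of z] rz \<open>p i \<noteq> 0\<close> by auto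
    ultimately show "i = x" using pq[OF \<open>p i \<noteq> 0\<close> qy] xyz by auto
  qed
  have q: "supported_at q y"
  proof (rule supported_atI[of q y, OF qy])
    fix i assume "q i \<noteq> 0"
    thus "i = y" using pq[OF px \<open>q i \<noteq> 0\<close>] qr[OF \<open>q i \<noteq> 0\<close> rz] xyz by auto
  qed
  have r: "supported_at r z"
  proof (rule supported_atI[of r z, OF rz])
    fix i assume "r i \<noteq> 0"
    moreover have "i \<noteq> x" using rp[of x] px \<open>r i \<noteq> 0\<close> by auto
    ultimately show "i = z" using qr[OF qy \<open>r i \<noteq> 0\<close>] xyz by auto
  qed
  from xyz show ?thesis
  proof
    assume "y = x + 1 \<and> z = y + 1"
    thus ?thesis using p q r by (intro exI[of _ x]) (simp add: numeral_2_eq_2)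
  next
    assume "x = y + 1 \<and> y = z + 1"
    thus ?thesis using p q r by (intro exI[of _ z]) (simp add: numeral_2_eq_2)
  qed
qed

lemma unit_steps_linear:
  fixes pos :: "nat \<Rightarrow> int"
  assumes "3 \<le> d"
    and step: "\<And>s. s + 3 \<le> d \<Longrightarrow>
      \<exists>e. (e = 1 \<or> e = -1) \<and> pos (s + 1) = pos s + e \<and> pos (s + 2) = pos s + 2 * e"
  shows "\<exists>e. (e = 1 \<or> e = -1) \<and> (\<forall>j<d. pos j = pos 0 + e * int j)"
proof -
  obtain e where e: "e = 1 \<or> e = -1" "pos 1 = pos 0 + e"
    using step[of 0] \<open>3 \<le> d\<close> by auto
  have "pos j = pos 0 + e * int j" if "j < d" for j
    using that
  proof (induction j rule: less_induct)
    case (less j)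
    show ?case
    proof (cases j)
      case (Suc j')
      show ?thesis
      proof (cases j')
        case (Suc i)
        hence j: "j = i + 2" using \<open>j = Suc j'\<close> by simp
        obtain e' where "pos (i + 1) = pos i + e'" "pos (i + 2) = pos i + 2 * e'"
          using step[of i] less.prems j by auto
        moreover have "pos i = pos 0 + e * int i" "pos (i + 1) = pos 0 + e * int (i + 1)"
          using less.IH[of i] less.IH[of "i + 1"] less.prems j by simp_all
        ultimately have "e' = e" "pos (i + 2) = pos i + 2 * e'" by (simp_all add: distrib_left)
        thus ?thesis using \<open>pos i = pos 0 + e * int i\<close> j by (simp add: distrib_left)
      qed (use e \<open>j = Suc j'\<close> in simp)
    qed simp
  qed
  thus ?thesis using e(1) by blast
qed

lemma point_three_supports_monotone:
  assumes P: "satisfies_rels TYPE('k::field) n d v" and V: "\<forall>j<d. v j \<in> vecs (n - 1)"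
    and "s + 3 \<le> d"
  shows "\<exists>c. (supported_at (v s) c \<and> supported_at (v (s + 1)) (c + 1) \<and> supported_at (v (s + 2)) (c + 2)) \<or>
             (supported_at (v s) (c + 2) \<and> supported_at (v (s + 1)) (c + 1) \<and> supported_at (v (s + 2)) c)"
proof -
  have "v s \<in> vecs (n - 1)" "v (s + 1) \<in> vecs (n - 1)" "v (s + 2) \<in> vecs (n - 1)"
    using V \<open>s + 3 \<le> d\<close> by simp_all
  then obtain x y z where "v s x \<noteq> 0" "v (s + 1) y \<noteq> 0" "v (s + 2) z \<noteq> 0"
    using vecs_nonzero by metis
  moreover have "y = x + 1 \<or> x = y + 1" if "v s x \<noteq> 0" "v (s + 1) y \<noteq> 0" for x y
    using point_entries_adjacent[OF P V _ that] \<open>s + 3 \<le> d\<close> by simp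
  moreover have "z = y + 1 \<or> y = z + 1" if "v (s + 1) y \<noteq> 0" "v (s + 2) z \<noteq> 0" for y z
    using point_entries_adjacent[OF P V, of "s + 1" y z] that \<open>s + 3 \<le> d\<close> by simp
  ultimately show ?thesis
    using three_supports_monotone[of "v s" "v (s + 1)" "v (s + 2)"] point_braid[OF P V \<open>s + 3 \<le> d\<close>]
    by blast
qed

lemma point_support_positions:
  assumes P: "satisfies_rels TYPE('k::field) n d v" and V: "\<forall>j<d. v j \<in> vecs (n - 1)"
    and "3 \<le> d"
  obtains pos where "\<And>j. j < d \<Longrightarrow> supported_at (v j) (pos j)"
proof -
  have "\<exists>x. supported_at (v j) x" if "j < d" for j
  proof -
    define s where "s = min j (d - 3)"
    have "s + 3 \<le> d" "j = s \<or> j = s + 1 \<or> j = s + 2" using that \<open>3 \<le> d\<close> by (auto simp: s_def)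
    thus ?thesis using point_three_supports_monotone[OF P V \<open>s + 3 \<le> d\<close>] by auto
  qed
  thus thesis using that by metis
qed

lemma point_support_steps:
  assumes P: "satisfies_rels TYPE('k::field) n d v" and V: "\<forall>j<d. v j \<in> vecs (n - 1)"
    and pos: "\<And>j. j < d \<Longrightarrow> supported_at (v j) (pos j)" and "s + 3 \<le> d"
  shows "\<exists>e. (e = 1 \<or> e = -1) \<and> int (pos (s + 1)) = int (pos s) + e \<and>
           int (pos (s + 2)) = int (pos s) + 2 * e"
proof -
  have p: "supported_at (v s) (pos s)" "supported_at (v (s + 1)) (pos (s + 1))"
    "supported_at (v (s + 2)) (pos (s + 2))" using pos \<open>s + 3 \<le> d\<close> by simp_all
  from point_three_supports_monotone[OF P V \<open>s + 3 \<le> d\<close>] obtain c where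
    "(supported_at (v s) c \<and> supported_at (v (s + 1)) (c + 1) \<and> supported_at (v (s + 2)) (c + 2)) \<or>
     (supported_at (v s) (c + 2) \<and> supported_at (v (s + 1)) (c + 1) \<and> supported_at (v (s + 2)) c)"
    by blast
  thus ?thesis
  proof (elim disjE conjE)
    assume "supported_at (v s) c" "supported_at (v (s + 1)) (c + 1)" "supported_at (v (s + 2)) (c + 2)"
    with p have "pos s = c" "pos (s + 1) = c + 1" "pos (s + 2) = c + 2"
      using supported_at_unique by blast+
    thus ?thesis by (intro exI[of _ 1]) simp
  next
    assume "supported_at (v s) (c + 2)" "supported_at (v (s + 1)) (c + 1)" "supported_at (v (s + 2)) c"
    with p have "pos s = c + 2" "pos (s + 1) = c + 1" "pos (s + 2) = c"
      using supported_at_unique by blast+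
    thus ?thesis by (intro exI[of _ "-1"]) simp
  qed
qed

lemma point_supports_monotone:
  assumes P: "satisfies_rels TYPE('k::field) n d v" and V: "\<forall>j<d. v j \<in> vecs (n - 1)"
    and "3 \<le> d"
  shows "\<exists>c. (\<forall>j<d. supported_at (v j) (c + j)) \<or> (\<forall>j<d. j \<le> c \<and> supported_at (v j) (c - j))"
proof -
  obtain pos where pos: "\<And>j. j < d \<Longrightarrow> supported_at (v j) (pos j)"
    using point_support_positions[OF P V \<open>3 \<le> d\<close>] by blast
  have "\<exists>e. (e = 1 \<or> e = -1) \<and> (\<forall>j<d. int (pos j) = int (pos 0) + e * int j)"
    by (rule unit_steps_linear[of d "\<lambda>j. int (pos j)", OF \<open>3 \<le> d\<close>])
       (rule point_support_steps[OF P V pos])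
  then obtain e :: int
    where e: "(e = 1 \<or> e = -1) \<and> (\<forall>j<d. int (pos j) = int (pos 0) + e * int j)" ..
  from e[THEN conjunct1] show ?thesis
  proof
    assume "e = 1"
    have "supported_at (v j) (pos 0 + j)" if "j < d" for j
    proof -
      have "int (pos j) = int (pos 0) + e * int j" using e that by blast
      hence "pos j = pos 0 + j" using \<open>e = 1\<close> by simp
      thus ?thesis using pos[OF that] by simp
    qed
    thus ?thesis by blast
  next
    assume "e = -1"
    have "j \<le> pos 0 \<and> supported_at (v j) (pos 0 - j)" if "j < d" for j
    proof -
      have "int (pos j) = int (pos 0) + e * int j" using e that by blast
      hence "int (pos j) + int j = int (pos 0)" using \<open>e = -1\<close> by simp
      hence "j \<le> pos 0" "pos 0 - j = pos j" by linarith+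
      thus ?thesis using pos[OF that] by simp
    qed
    thus ?thesis by blast
  qed
qed

lemma supported_at_vecs: "supported_at w x \<Longrightarrow> w \<in> vecs m \<Longrightarrow> 1 \<le> x \<and> x \<le> m"
  by (auto simp: supported_at_def vecs_def)

lemma Pd_An_eq_monotone_points:
  assumes "3 \<le> d"
  shows "Pd_An TYPE('k::field) n d = inc_point d ` {1..n - d} \<union> dec_point d ` {d..n - 1}"
proof
  show "inc_point d ` {1..n - d} \<union> dec_point d ` {d..n - 1} \<subseteq> Pd_An TYPE('k) n d"
  proof (intro Un_least image_subsetI)
    fix a assume "a \<in> {1..n - d}"
    thus "inc_point d a \<in> Pd_An TYPE('k) n d" using assms by (intro inc_point_in_Pd_An) auto
  next
    fix b assume "b \<in> {d..n - 1}"
    thus "dec_point d b \<in> Pd_An TYPE('k) n d" using assms by (intro dec_point_in_Pd_An) auto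
  qed
next
  show "Pd_An TYPE('k) n d \<subseteq> inc_point d ` {1..n - d} \<union> dec_point d ` {d..n - 1}"
  proof
    fix z assume "z \<in> Pd_An TYPE('k) n d"
    then obtain v :: "nat \<Rightarrow> nat \<Rightarrow> 'k" where z: "z = proj_tuple d v"
      and V: "\<forall>j<d. v j \<in> vecs (n - 1)" and P: "satisfies_rels TYPE('k) n d v"
      unfolding Pd_An_iff by blast
    have ends: "0 < d" "d - 1 < d" using assms by auto
    from point_supports_monotone[OF P V assms] obtain c
      where "(\<forall>j<d. supported_at (v j) (c + j)) \<or> (\<forall>j<d. j \<le> c \<and> supported_at (v j) (c - j))"
      by blast
    thus "z \<in> inc_point d ` {1..n - d} \<union> dec_point d ` {d..n - 1}"
    proof (elim disjE)
      assume inc: "\<forall>j<d. supported_at (v j) (c + j)"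
      have "1 \<le> c + 0" "c + (d - 1) \<le> n - 1"
        using supported_at_vecs[OF inc[rule_format] V[rule_format]] ends by blast+
      moreover have "z = inc_point d c"
        unfolding z inc_point_def using inc by (intro proj_tuple_cong) (simp add: supported_at_ppt)
      ultimately show ?thesis using assms by auto
    next
      assume dec: "\<forall>j<d. j \<le> c \<and> supported_at (v j) (c - j)"
      have "c - 0 \<le> n - 1" "1 \<le> c - (d - 1)" "d - 1 \<le> c"
        using supported_at_vecs[OF dec[rule_format, THEN conjunct2] V[rule_format]] dec ends
        by blast+
      moreover have "z = dec_point d c"
        unfolding z dec_point_def using dec by (intro proj_tuple_cong) (simp add: supported_at_ppt)
      ultimately show ?thesis using assms by auto
    qed
  qed
qed

lemma card_monotone_points:
  assumes "2 \<le> d"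
  shows "card (inc_point d ` {1..n - d} \<union> dec_point d ` {d..n - 1}
           :: (nat \<Rightarrow> (nat \<Rightarrow> 'k::field) set) set) = 2 * (n - d)"
proof -
  have coord: "f j = g j"
    if "proj_tuple d (\<lambda>j. basis_vec (f j) :: nat \<Rightarrow> 'k) = proj_tuple d (\<lambda>j. basis_vec (g j))" "j < d"
    for f g j
    using proj_tuple_eqD[OF that] by (simp add: ppt_basis_vec_eq_iff)
  have "inj_on (inc_point d :: nat \<Rightarrow> nat \<Rightarrow> (nat \<Rightarrow> 'k) set) {1..n - d}"
  proof (rule inj_onI)
    fix a b assume "inc_point d a = (inc_point d b :: nat \<Rightarrow> (nat \<Rightarrow> 'k) set)"
    thus "a = b" using coord[of "\<lambda>j. a + j" "\<lambda>j. b + j" 0] assms by (simp add: inc_point_def)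
  qed
  moreover have "inj_on (dec_point d :: nat \<Rightarrow> nat \<Rightarrow> (nat \<Rightarrow> 'k) set) {d..n - 1}"
  proof (rule inj_onI)
    fix a b assume "dec_point d a = (dec_point d b :: nat \<Rightarrow> (nat \<Rightarrow> 'k) set)"
    thus "a = b" using coord[of "\<lambda>j. a - j" "\<lambda>j. b - j" 0] assms by (simp add: dec_point_def)
  qed
  moreover have "inc_point d a \<noteq> (dec_point d b :: nat \<Rightarrow> (nat \<Rightarrow> 'k) set)" for a b
  proof
    assume "inc_point d a = (dec_point d b :: nat \<Rightarrow> (nat \<Rightarrow> 'k) set)"
    hence "a + 0 = b - 0" "a + 1 = b - 1"
      using coord[of "\<lambda>j. a + j" "\<lambda>j. b - j" 0] coord[of "\<lambda>j. a + j" "\<lambda>j. b - j" 1] assms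
      by (simp_all add: inc_point_def dec_point_def)
    thus False by simp
  qed
  ultimately show ?thesis
    using assms by (subst card_Un_disjoint) (auto simp: card_image)
qed

section \<open>Points of degree two\<close>

text \<open>In degree two only the quadratic relations of \<open>E\<^sub>A\<^sub>n\<close> are visible.\<close>

lemma Pd_An_2_iff:
  "z \<in> Pd_An TYPE('k::field) n 2 \<longleftrightarrow>
     (\<exists>v. z = proj_tuple 2 v \<and> v 0 \<in> vecs (n - 1) \<and> v 1 \<in> vecs (n - 1) \<and>
          (\<forall>x y. v 0 x \<noteq> 0 \<longrightarrow> v 1 y \<noteq> 0 \<longrightarrow> y = x + 1 \<or> x = y + 1))"
proof
  assume "z \<in> Pd_An TYPE('k) n 2"
  then obtain v :: "nat \<Rightarrow> nat \<Rightarrow> 'k" where "z = proj_tuple 2 v"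
    and V: "\<forall>j<2. v j \<in> vecs (n - 1)" and P: "satisfies_rels TYPE('k) n 2 v"
    unfolding Pd_An_iff by blast
  moreover have "y = x + 1 \<or> x = y + 1" if "v 0 x \<noteq> 0" "v 1 y \<noteq> 0" for x y
    using point_entries_adjacent[OF P V, of 0 x y] that by simp
  ultimately show "\<exists>v. z = proj_tuple 2 v \<and> v 0 \<in> vecs (n - 1) \<and> v 1 \<in> vecs (n - 1) \<and>
      (\<forall>x y. v 0 x \<noteq> 0 \<longrightarrow> v 1 y \<noteq> 0 \<longrightarrow> y = x + 1 \<or> x = y + 1)"
    by (intro exI[of _ v]) simp
next
  assume "\<exists>v. z = proj_tuple 2 v \<and> v 0 \<in> vecs (n - 1) \<and> v 1 \<in> vecs (n - 1) \<and>
      (\<forall>x y. v 0 x \<noteq> 0 \<longrightarrow> v 1 y \<noteq> 0 \<longrightarrow> y = x + 1 \<or> x = y + 1)"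
  then obtain v :: "nat \<Rightarrow> nat \<Rightarrow> 'k" where z: "z = proj_tuple 2 v"
    and V: "v 0 \<in> vecs (n - 1)" "v 1 \<in> vecs (n - 1)"
    and adj: "\<And>x y. v 0 x \<noteq> 0 \<Longrightarrow> v 1 y \<noteq> 0 \<Longrightarrow> y = x + 1 \<or> x = y + 1" by blast
  have "1 \<le> n" using vecs_nonzero[OF V(1)] vecs_support[OF V(1)] by fastforce
  have "proj_tuple 2 v \<in> Pd_An TYPE('k) n 2"
  proof (rule proj_tuple_in_Pd_An[OF _ \<open>1 \<le> n\<close>])
    show "\<forall>j<2. v j \<in> vecs (n - 1)" using V by (simp add: less_2_cases_iff)
  next
    fix s t u assume st: "s + t \<le> 2" "2 \<le> t" and u: "u \<in> index_words n t"
      and nz: "word_eval v s t u \<noteq> 0"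
    have "t = 2" "s = 0" using st by auto
    then obtain x y where "u = [x, y]"
      using u by (auto simp: index_words_def numeral_2_eq_2 length_Suc_conv)
    hence "v 1 x \<noteq> 0" "v 0 y \<noteq> 0" using nz \<open>t = 2\<close> \<open>s = 0\<close> by (auto simp: word_eval_2)
    hence "u = rev [y..<y + 2] \<or> u = [x..<x + 2]"
      using adj[of y x] \<open>u = [x, y]\<close> by (auto simp: numeral_2_eq_2)
    thus "\<exists>c. u = rev [c..<c + t] \<or> u = [c..<c + t]" using \<open>t = 2\<close> by blast
  qed
  thus "z \<in> Pd_An TYPE('k) n 2" using z by simp
qed

lemma Pd_An_3_2_supports:
  assumes "z \<in> Pd_An TYPE('k::field) 3 2"
  obtains v x y where "z = proj_tuple 2 v" "supported_at (v 0) x" "supported_at (v 1) y"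
    and "x = 1 \<and> y = 2 \<or> x = 2 \<and> y = 1"
proof -
  obtain v :: "nat \<Rightarrow> nat \<Rightarrow> 'k" where z: "z = proj_tuple 2 v"
    and V: "v 0 \<in> vecs 2" "v 1 \<in> vecs 2"
    and adj: "\<And>x y. v 0 x \<noteq> 0 \<Longrightarrow> v 1 y \<noteq> 0 \<Longrightarrow> y = x + 1 \<or> x = y + 1"
    using assms unfolding Pd_An_2_iff by auto
  obtain x y where x: "v 0 x \<noteq> 0" and y: "v 1 y \<noteq> 0" using vecs_nonzero V by metis
  have one_two: "i = 1 \<or> i = 2" if "v j i \<noteq> 0" "j < 2" for i j
    using vecs_support[of "v j" 2 i] V that by (auto simp: less_2_cases_iff)
  have "supported_at (v 0) x"
  proof (rule supported_atI[of "v 0" x, OF x])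
    fix i assume "v 0 i \<noteq> 0"
    thus "i = x" using adj[OF _ y, of i] adj[OF x y] one_two[of 0 i] one_two[of 0 x] x by auto
  qed
  moreover have "supported_at (v 1) y"
  proof (rule supported_atI[of "v 1" y, OF y])
    fix i assume "v 1 i \<noteq> 0"
    thus "i = y" using adj[OF x, of i] adj[OF x y] one_two[of 1 i] one_two[of 1 y] y by auto
  qed
  moreover have "x = 1 \<or> x = 2" "y = 1 \<or> y = 2" using one_two[OF x] one_two[OF y] by simp_all
  hence "x = 1 \<and> y = 2 \<or> x = 2 \<and> y = 1" using adj[OF x y] by auto
  ultimately show thesis using that z by blast
qed

lemma Pd_An_3_2: "Pd_An TYPE('k::field) 3 2 = inc_point 2 ` {1..3 - 2} \<union> dec_point 2 ` {2..3 - 1}"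
proof
  show "inc_point 2 ` {1..3 - 2} \<union> dec_point 2 ` {2..3 - 1} \<subseteq> Pd_An TYPE('k) 3 2"
    using inc_point_in_Pd_An[of 1 2 3] dec_point_in_Pd_An[of 2 2 3] by auto
next
  show "Pd_An TYPE('k) 3 2 \<subseteq> inc_point 2 ` {1..3 - 2} \<union> dec_point 2 ` {2..3 - 1}"
  proof
    fix z assume "z \<in> Pd_An TYPE('k) 3 2"
    then obtain v :: "nat \<Rightarrow> nat \<Rightarrow> 'k" and x y where z: "z = proj_tuple 2 v"
      and "supported_at (v 0) x" "supported_at (v 1) y" and xy: "x = 1 \<and> y = 2 \<or> x = 2 \<and> y = 1"
      by (rule Pd_An_3_2_supports)
    hence pts: "ppt (v 0) = ppt (basis_vec x)" "ppt (v 1) = ppt (basis_vec y)"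
      by (simp_all add: supported_at_ppt)
    from xy have "z = inc_point 2 1 \<or> z = dec_point 2 2"
    proof (elim disjE conjE)
      assume "x = 1" "y = 2"
      hence "z = inc_point 2 1"
        unfolding z inc_point_def using pts by (intro proj_tuple_2_cong) (simp_all add: numeral_2_eq_2)
      thus ?thesis ..
    next
      assume "x = 2" "y = 1"
      hence "z = dec_point 2 2"
        unfolding z dec_point_def using pts by (intro proj_tuple_2_cong) (simp_all add: numeral_2_eq_2)
      thus ?thesis ..
    qed
    thus "z \<in> inc_point 2 ` {1..3 - 2} \<union> dec_point 2 ` {2..3 - 1}" by auto
  qed
qed

definition line_vec :: "nat \<Rightarrow> 'k::field \<times> 'k \<Rightarrow> nat \<Rightarrow> 'k" where
  "line_vec a = (\<lambda>(s, t) i. s * basis_vec (a - 1) i + t * basis_vec (a + 1) i)"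

definition line_pt :: "nat \<Rightarrow> 'k::field \<times> 'k \<Rightarrow> (nat \<Rightarrow> 'k) set" where
  "line_pt a st = ppt (line_vec a st)"

definition const_pt :: "nat \<Rightarrow> 'k::field \<times> 'k \<Rightarrow> (nat \<Rightarrow> 'k) set" where
  "const_pt a st = ppt (basis_vec a)"

definition curve :: "('k::field \<times> 'k \<Rightarrow> (nat \<Rightarrow> 'k) set) \<Rightarrow> ('k \<times> 'k \<Rightarrow> (nat \<Rightarrow> 'k) set)
    \<Rightarrow> (nat \<Rightarrow> (nat \<Rightarrow> 'k) set) set" where
  "curve F G = {(\<lambda>j. if j = 0 then F (s, t) else if j = 1 then G (s, t) else {}) | s t. (s, t) \<noteq> (0, 0)}"

text \<open>Component \<open>2k\<close> is the line of points \<open>(x, e\<^sub>a)\<close> with \<open>x\<close> on the line through \<open>e\<^sub>a\<^sub>-\<^sub>1\<close>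
  and \<open>e\<^sub>a\<^sub>+\<^sub>1\<close>, component \<open>2k + 1\<close> the line of points \<open>(e\<^sub>a, x)\<close>, where \<open>a = k + 2\<close>.\<close>

definition P1_component :: "nat \<Rightarrow> (nat \<Rightarrow> (nat \<Rightarrow> 'k::field) set) set" where
  "P1_component i = (let a = i div 2 + 2 in
     if even i then curve (line_pt a) (const_pt a) else curve (const_pt a) (line_pt a))"

lemma line_vec_nonzero: "line_vec a st i \<noteq> 0 \<Longrightarrow> i = a - 1 \<or> i = a + 1"
  by (cases st) (auto simp: line_vec_def basis_vec_def split: if_splits)

lemma line_vec_in_vecs:
  assumes "2 \<le> a" "a + 2 \<le> n" "(s, t) \<noteq> (0, 0)"
  shows "line_vec a (s, t) \<in> vecs (n - 1)"
proof -
  have "line_vec a (s, t) (a - 1) = s" "line_vec a (s, t) (a + 1) = t"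
    using assms(1) by (simp_all add: line_vec_def basis_vec_def)
  hence "\<exists>i. line_vec a (s, t) i \<noteq> 0" using assms(3) by metis
  moreover have "i \<in> {1..n - 1}" if "line_vec a (s, t) i \<noteq> 0" for i
    using line_vec_nonzero[OF that] assms(1,2) by auto
  ultimately show ?thesis unfolding vecs_def by blast
qed

lemma line_vec_eq:
  assumes "\<And>i. p i \<noteq> 0 \<Longrightarrow> i = a - 1 \<or> i = a + 1"
  shows "p = line_vec a (p (a - 1), p (a + 1))"
proof
  fix i show "p i = line_vec a (p (a - 1), p (a + 1)) i"
    using assms[of i] by (cases "i = a - 1"; cases "i = a + 1") (auto simp: line_vec_def basis_vec_def)
qed

lemma line_vec_10: "line_vec a (1, 0) = basis_vec (a - 1)"
  and line_vec_01: "line_vec a (0, 1) = basis_vec (a + 1)"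
  by (simp_all add: line_vec_def fun_eq_iff)

lemma line_pt_11_ne_basis: "line_pt a (1, 1) \<noteq> ppt (basis_vec b :: nat \<Rightarrow> 'k::field)"
proof
  assume "line_pt a (1, 1) = ppt (basis_vec b :: nat \<Rightarrow> 'k)"
  then obtain c :: 'k where "c \<noteq> 0" "basis_vec b = (\<lambda>i. c * line_vec a (1, 1) i)"
    unfolding line_pt_def using ppt_eqD by blast
  hence "basis_vec b (a - 1) = c" "basis_vec b (a + 1) = (c :: 'k)"
    by (simp_all add: line_vec_def basis_vec_def)
  with \<open>c \<noteq> 0\<close> show False by (auto simp: basis_vec_def split: if_splits)
qed

lemma is_P1_copy_curves:
  assumes "2 \<le> a" "a + 2 \<le> n"
  shows "is_P1_copy (n - 1) (curve (line_pt a) (const_pt a) :: (nat \<Rightarrow> (nat \<Rightarrow> 'k::field) set) set)"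
    and "is_P1_copy (n - 1) (curve (const_pt a) (line_pt a) :: (nat \<Rightarrow> (nat \<Rightarrow> 'k) set) set)"
proof -
  have "line_map (n - 1) (line_pt a :: 'k \<times> 'k \<Rightarrow> _)"
    unfolding line_map_def
  proof (intro exI conjI allI impI)
    fix i assume "(basis_vec (a - 1) i :: 'k) \<noteq> 0 \<or> (basis_vec (a + 1) i :: 'k) \<noteq> 0"
    thus "i \<in> {1..n - 1}" using assms by (auto simp: basis_vec_def split: if_splits)
  next
    fix s t :: 'k assume h: "\<forall>i. s * basis_vec (a - 1) i + t * basis_vec (a + 1) i = 0"
    from h[rule_format, of "a - 1"] h[rule_format, of "a + 1"] assms(1)
    show "s = 0" "t = 0" by (auto simp: basis_vec_def split: if_splits)
  qed (simp add: line_pt_def line_vec_def fun_eq_iff)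
  moreover have "const_map (n - 1) (const_pt a :: 'k \<times> 'k \<Rightarrow> _)"
    unfolding const_map_def const_pt_def using assms by (intro bexI[of _ "basis_vec a"] basis_vec_in_vecs) auto
  ultimately show "is_P1_copy (n - 1) (curve (line_pt a) (const_pt a) :: (nat \<Rightarrow> (nat \<Rightarrow> 'k) set) set)"
    and "is_P1_copy (n - 1) (curve (const_pt a) (line_pt a) :: (nat \<Rightarrow> (nat \<Rightarrow> 'k) set) set)"
    unfolding is_P1_copy_def curve_def by blast+
qed

lemma curve_memD: "z \<in> curve F G \<Longrightarrow> \<exists>s t. (s, t) \<noteq> (0, 0) \<and> z 0 = F (s, t) \<and> z 1 = G (s, t)"
  unfolding curve_def by force

lemma curve_memI:
  "(s, t) \<noteq> (0, 0) \<Longrightarrow> (\<lambda>j. if j = 0 then F (s, t) else if j = 1 then G (s, t) else {}) \<in> curve F G"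
  unfolding curve_def by blast

lemma proj_tuple_2_in_curve:
  "proj_tuple 2 v \<in> curve F G \<longleftrightarrow> (\<exists>s t. (s, t) \<noteq> (0, 0) \<and> ppt (v 0) = F (s, t) \<and> ppt (v 1) = G (s, t))"
proof
  assume "proj_tuple 2 v \<in> curve F G"
  then obtain s t where "(s, t) \<noteq> (0, 0)" "proj_tuple 2 v 0 = F (s, t)" "proj_tuple 2 v 1 = G (s, t)"
    using curve_memD by blast
  moreover from this have "ppt (v 0) = F (s, t)" "ppt (v 1) = G (s, t)"
    by (simp_all add: proj_tuple_def)
  ultimately show "\<exists>s t. (s, t) \<noteq> (0, 0) \<and> ppt (v 0) = F (s, t) \<and> ppt (v 1) = G (s, t)"
    by blast
next
  assume "\<exists>s t. (s, t) \<noteq> (0, 0) \<and> ppt (v 0) = F (s, t) \<and> ppt (v 1) = G (s, t)"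
  then obtain s t where "(s, t) \<noteq> (0, 0)" "ppt (v 0) = F (s, t)" "ppt (v 1) = G (s, t)" by blast
  moreover from this have "proj_tuple 2 v = (\<lambda>j. if j = 0 then F (s, t) else if j = 1 then G (s, t) else {})"
    by (simp add: proj_tuple_def fun_eq_iff less_2_cases_iff)
  ultimately show "proj_tuple 2 v \<in> curve F G" unfolding curve_def by blast
qed

lemma curves_subset_Pd_An:
  assumes "2 \<le> a" "a + 2 \<le> n"
  shows "curve (line_pt a) (const_pt a) \<subseteq> Pd_An TYPE('k::field) n 2"
    and "curve (const_pt a) (line_pt a) \<subseteq> Pd_An TYPE('k) n 2"
proof -
  have vecs: "line_vec a (s, t) \<in> vecs (n - 1)" "basis_vec a \<in> vecs (n - 1)"
    if "(s, t) \<noteq> (0, 0)" for s t :: 'k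
    using line_vec_in_vecs[OF assms that] assms by (auto intro: basis_vec_in_vecs)
  have adj: "a = x + 1 \<or> x = a + 1" if "line_vec a st x \<noteq> (0::'k)" for st x
    using line_vec_nonzero[OF that] assms(1) by auto
  have basis: "y = a" if "basis_vec a y \<noteq> (0::'k)" for y
    using that by (simp add: basis_vec_def split: if_splits)
  have pair_in: "proj_tuple 2 v \<in> Pd_An TYPE('k) n 2"
    if "v 0 \<in> vecs (n - 1)" "v 1 \<in> vecs (n - 1)"
      "\<And>x y. v 0 x \<noteq> 0 \<Longrightarrow> v 1 y \<noteq> 0 \<Longrightarrow> y = x + 1 \<or> x = y + 1" for v
    unfolding Pd_An_2_iff using that by blast
  show "curve (line_pt a) (const_pt a) \<subseteq> Pd_An TYPE('k) n 2"
  proof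
    fix z :: "nat \<Rightarrow> (nat \<Rightarrow> 'k) set" assume "z \<in> curve (line_pt a) (const_pt a)"
    then obtain s t :: 'k where st: "(s, t) \<noteq> (0, 0)"
      and z: "z = (\<lambda>j. if j = 0 then line_pt a (s, t) else if j = 1 then const_pt a (s, t) else {})"
      unfolding curve_def by blast
    have "z = proj_tuple 2 (\<lambda>j. if j = 0 then line_vec a (s, t) else basis_vec a)"
      unfolding z proj_tuple_def line_pt_def const_pt_def by (simp add: fun_eq_iff less_2_cases_iff)
    also have "\<dots> \<in> Pd_An TYPE('k) n 2"
      using vecs[OF st] adj basis by (intro pair_in) (simp_all, metis)
    finally show "z \<in> Pd_An TYPE('k) n 2" .
  qed
  show "curve (const_pt a) (line_pt a) \<subseteq> Pd_An TYPE('k) n 2"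
  proof
    fix z :: "nat \<Rightarrow> (nat \<Rightarrow> 'k) set" assume "z \<in> curve (const_pt a) (line_pt a)"
    then obtain s t :: 'k where st: "(s, t) \<noteq> (0, 0)"
      and z: "z = (\<lambda>j. if j = 0 then const_pt a (s, t) else if j = 1 then line_pt a (s, t) else {})"
      unfolding curve_def by blast
    have "z = proj_tuple 2 (\<lambda>j. if j = 0 then basis_vec a else line_vec a (s, t))"
      unfolding z proj_tuple_def line_pt_def const_pt_def by (simp add: fun_eq_iff less_2_cases_iff)
    also have "\<dots> \<in> Pd_An TYPE('k) n 2"
      using vecs[OF st] adj basis by (intro pair_in) (simp_all, metis)
    finally show "z \<in> Pd_An TYPE('k) n 2" .
  qed
qed

lemma adjacent_supports_cases:
  fixes p q :: "nat \<Rightarrow> 'k::zero"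
  assumes adj: "\<And>x y. p x \<noteq> 0 \<Longrightarrow> q y \<noteq> 0 \<Longrightarrow> y = x + 1 \<or> x = y + 1"
    and x: "p x \<noteq> 0" and y: "q y \<noteq> 0"
  shows "supported_at q y \<or> supported_at p x"
proof (rule ccontr)
  assume "\<not> (supported_at q y \<or> supported_at p x)"
  then obtain x' y' where "p x' \<noteq> 0" "x' \<noteq> x" "q y' \<noteq> 0" "y' \<noteq> y"
    using x y unfolding supported_at_def by blast
  \<comment> \<open>two distinct indices with the same two distinct neighbours cannot exist\<close>
  thus False using adj[OF x y] adj[OF x \<open>q y' \<noteq> 0\<close>] adj[OF \<open>p x' \<noteq> 0\<close> y]
      adj[OF \<open>p x' \<noteq> 0\<close> \<open>q y' \<noteq> 0\<close>] by auto
qed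

lemma point_on_curve_if_neighbour_support:
  fixes p q :: "nat \<Rightarrow> 'k::field"
  assumes "3 < n" and p: "p \<in> vecs (n - 1)" and q: "q \<in> vecs (n - 1)" "supported_at q y"
    and adj: "\<And>x. p x \<noteq> 0 \<Longrightarrow> y = x + 1 \<or> x = y + 1"
  shows "\<exists>a s t. 2 \<le> a \<and> a + 2 \<le> n \<and> (s, t) \<noteq> (0, 0) \<and>
    (ppt p = line_pt a (s, t) \<and> ppt q = const_pt a (s, t) \<or>
     ppt p = const_pt a (s, t) \<and> ppt q = line_pt a (s, t))"
proof -
  have "1 \<le> y" "y \<le> n - 1" using supported_at_vecs[OF q(2,1)] by auto
  have q_pt: "ppt q = ppt (basis_vec y)" using supported_at_ppt[OF q(2)] .
  obtain x0 where "p x0 \<noteq> 0" using vecs_nonzero[OF p] by blast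
  have supp: "1 \<le> x \<and> x \<le> n - 1" if "p x \<noteq> 0" for x using vecs_support[OF p that] .
  \<comment> \<open>at the ends \<open>y = 1\<close> and \<open>y = n - 1\<close> the support of \<open>p\<close> is the single inner neighbour,
    and the point lies on the line of that neighbour, with parameter \<open>(1, 0)\<close> or \<open>(0, 1)\<close>\<close>
  consider "y = 1" | "y = n - 1" | "2 \<le> y \<and> y + 2 \<le> n" using \<open>1 \<le> y\<close> \<open>y \<le> n - 1\<close> by linarith
  thus ?thesis
  proof cases
    case 1
    have two: "x = 2" if "p x \<noteq> 0" for x using adj[OF that] supp[OF that] 1 by auto
    have "supported_at p 2"
      using two[OF \<open>p x0 \<noteq> 0\<close>] \<open>p x0 \<noteq> 0\<close> two by (intro supported_atI) auto
    hence "ppt p = const_pt 2 (1, 0) \<and> ppt q = line_pt 2 (1, 0)"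
      using q_pt 1 by (simp add: supported_at_ppt const_pt_def line_pt_def line_vec_10)
    thus ?thesis using \<open>3 < n\<close> by (intro exI[of _ 2] exI[of _ 1] exI[of _ 0]) auto
  next
    case 2
    have below: "x = n - 2" if "p x \<noteq> 0" for x using adj[OF that] supp[OF that] 2 by auto
    have "supported_at p (n - 2)"
      using below[OF \<open>p x0 \<noteq> 0\<close>] \<open>p x0 \<noteq> 0\<close> below by (intro supported_atI) auto
    moreover have "n - 2 + 1 = n - 1" using \<open>3 < n\<close> by simp
    ultimately have "ppt p = const_pt (n - 2) (0, 1) \<and> ppt q = line_pt (n - 2) (0, 1)"
      using q_pt 2 by (simp add: supported_at_ppt const_pt_def line_pt_def line_vec_01)
    thus ?thesis using \<open>3 < n\<close> by (intro exI[of _ "n - 2"] exI[of _ 0] exI[of _ 1]) auto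
  next
    case 3
    have "\<And>i. p i \<noteq> 0 \<Longrightarrow> i = y - 1 \<or> i = y + 1" using adj by force
    hence "p = line_vec y (p (y - 1), p (y + 1))" by (rule line_vec_eq)
    moreover have "(p (y - 1), p (y + 1)) \<noteq> (0, 0)"
      using \<open>p x0 \<noteq> 0\<close> adj[OF \<open>p x0 \<noteq> 0\<close>] by (metis add_diff_cancel_right' prod.inject)
    ultimately show ?thesis using 3 q_pt
      by (intro exI[of _ y] exI[of _ "p (y - 1)"] exI[of _ "p (y + 1)"])
         (simp add: line_pt_def const_pt_def)
  qed
qed

lemma curves_are_components:
  assumes "2 \<le> a" "a + 2 \<le> n"
  shows "curve (line_pt a) (const_pt a) = P1_component (2 * (a - 2))"
    and "curve (const_pt a) (line_pt a) = P1_component (2 * (a - 2) + 1)"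
    and "2 * (a - 2) + 1 < 2 * n - 6"
proof -
  have idx: "2 * (a - 2) div 2 + 2 = a" "(2 * (a - 2) + 1) div 2 + 2 = a" using assms by simp_all
  show "curve (line_pt a) (const_pt a) = P1_component (2 * (a - 2))"
    and "curve (const_pt a) (line_pt a) = P1_component (2 * (a - 2) + 1)"
    unfolding P1_component_def Let_def idx by simp_all
  show "2 * (a - 2) + 1 < 2 * n - 6" using assms by simp
qed

lemma Pd_An_2_subset_components:
  assumes "3 < n"
  shows "Pd_An TYPE('k::field) n 2 \<subseteq> (\<Union>i<2 * n - 6. P1_component i)"
proof
  fix z assume "z \<in> Pd_An TYPE('k) n 2"
  then obtain v :: "nat \<Rightarrow> nat \<Rightarrow> 'k" where z: "z = proj_tuple 2 v"
    and V: "v 0 \<in> vecs (n - 1)" "v 1 \<in> vecs (n - 1)"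
    and adj: "\<And>x y. v 0 x \<noteq> 0 \<Longrightarrow> v 1 y \<noteq> 0 \<Longrightarrow> y = x + 1 \<or> x = y + 1"
    unfolding Pd_An_2_iff by blast
  obtain x y where x: "v 0 x \<noteq> 0" and y: "v 1 y \<noteq> 0" using vecs_nonzero V by metis
  have "\<exists>a s t. 2 \<le> a \<and> a + 2 \<le> n \<and> (s, t) \<noteq> (0, 0) \<and>
    (ppt (v 0) = line_pt a (s, t) \<and> ppt (v 1) = const_pt a (s, t) \<or>
     ppt (v 0) = const_pt a (s, t) \<and> ppt (v 1) = line_pt a (s, t))"
    using adjacent_supports_cases[of "v 0" "v 1", OF adj x y]
  proof
    assume "supported_at (v 1) y"
    thus ?thesis using point_on_curve_if_neighbour_support[OF \<open>3 < n\<close> V] adj[OF _ y] by blast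
  next
    assume "supported_at (v 0) x"
    moreover have "x = y' + 1 \<or> y' = x + 1" if "v 1 y' \<noteq> 0" for y' using adj[OF x that] by auto
    ultimately show ?thesis using point_on_curve_if_neighbour_support[OF \<open>3 < n\<close> V(2) V(1)] by blast
  qed
  then obtain a s t where a: "2 \<le> a" "a + 2 \<le> n" and "(s, t) \<noteq> (0, 0)"
    and "ppt (v 0) = line_pt a (s, t) \<and> ppt (v 1) = const_pt a (s, t) \<or>
         ppt (v 0) = const_pt a (s, t) \<and> ppt (v 1) = line_pt a (s, t)"
    by blast
  hence "z \<in> curve (line_pt a) (const_pt a) \<or> z \<in> curve (const_pt a) (line_pt a)"
    unfolding z proj_tuple_2_in_curve using \<open>(s, t) \<noteq> (0, 0)\<close> by (elim disjE conjE) blast+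
  moreover have "2 * (a - 2) < 2 * n - 6" "2 * (a - 2) + 1 < 2 * n - 6"
    using curves_are_components(3)[OF a] by simp_all
  ultimately show "z \<in> (\<Union>i<2 * n - 6. P1_component i)"
    unfolding curves_are_components(1,2)[OF a] by blast
qed

lemma inj_P1_component: "inj (P1_component :: nat \<Rightarrow> (nat \<Rightarrow> (nat \<Rightarrow> 'k::field) set) set)"
proof (rule injI)
  fix i j :: nat
  assume eq: "(P1_component i :: (nat \<Rightarrow> (nat \<Rightarrow> 'k) set) set) = P1_component j"
  define a b where "a = i div 2 + 2" and "b = j div 2 + 2"
  define F G where "F = (if even i then line_pt a else const_pt a :: 'k \<times> 'k \<Rightarrow> _)"
    and "G = (if even i then const_pt a else line_pt a :: 'k \<times> 'k \<Rightarrow> _)"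
  \<comment> \<open>the point with parameter \<open>(1, 1)\<close> of component \<open>i\<close> lies in component \<open>j\<close>\<close>
  have "P1_component i = curve F G"
    unfolding P1_component_def F_def G_def a_def Let_def by simp
  hence "(\<lambda>k. if k = 0 then F (1, 1) else if k = 1 then G (1, 1) else {}) \<in> P1_component j"
    using eq curve_memI[of "1 :: 'k" 1 F G] by simp
  moreover have "(P1_component j :: (nat \<Rightarrow> (nat \<Rightarrow> 'k) set) set) =
      curve (if even j then line_pt b else const_pt b) (if even j then const_pt b else line_pt b)"
    unfolding P1_component_def b_def Let_def by simp
  ultimately have "(\<lambda>k. if k = 0 then F (1, 1) else if k = 1 then G (1, 1) else {})
      \<in> curve (if even j then line_pt b else const_pt b) (if even j then const_pt b else line_pt b)"
    by (simp only:)
  from curve_memD[OF this] obtain s t :: 'k where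
    j0: "F (1, 1) = (if even j then line_pt b else const_pt b) (s, t)" and
    j1: "G (1, 1) = (if even j then const_pt b else line_pt b) (s, t)"
    by auto
  have "even i = even j \<and> a = b"
  proof (cases "even i"; cases "even j")
    assume "even i" "even j"
    thus ?thesis using j1 by (simp add: G_def const_pt_def ppt_basis_vec_eq_iff)
  next
    assume "even i" "odd j"
    thus ?thesis using j0 line_pt_11_ne_basis[where 'k='k, of a b] by (simp add: F_def const_pt_def)
  next
    assume "odd i" "even j"
    thus ?thesis using j1 line_pt_11_ne_basis[where 'k='k, of a b] by (simp add: G_def const_pt_def)
  next
    assume "odd i" "odd j"
    thus ?thesis using j0 by (simp add: F_def const_pt_def ppt_basis_vec_eq_iff)
  qed
  thus "i = j" unfolding a_def b_def by (metis add_right_cancel div_mult_mod_eq odd_iff_mod_2_eq_one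
      even_iff_mod_2_eq_zero)
qed

lemma P1_component_cases:
  assumes "i < 2 * n - 6"
  obtains a where "2 \<le> a" "a + 2 \<le> n"
    and "(P1_component i :: (nat \<Rightarrow> (nat \<Rightarrow> 'k::field) set) set)
           \<in> {curve (line_pt a) (const_pt a), curve (const_pt a) (line_pt a)}"
proof -
  define a where "a = i div 2 + 2"
  have "2 \<le> a" "a + 2 \<le> n" using assms by (auto simp: a_def)
  moreover have "(P1_component i :: (nat \<Rightarrow> (nat \<Rightarrow> 'k) set) set)
      \<in> {curve (line_pt a) (const_pt a), curve (const_pt a) (line_pt a)}"
    by (simp add: P1_component_def a_def)
  ultimately show thesis using that by blast
qed

lemma is_P1_copy_P1_component:
  assumes "i < 2 * n - 6"
  shows "is_P1_copy (n - 1) (P1_component i :: (nat \<Rightarrow> (nat \<Rightarrow> 'k::field) set) set)"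
proof -
  obtain a where a: "2 \<le> a" "a + 2 \<le> n" and "(P1_component i :: (nat \<Rightarrow> (nat \<Rightarrow> 'k) set) set)
      \<in> {curve (line_pt a) (const_pt a), curve (const_pt a) (line_pt a)}"
    using P1_component_cases[OF assms] by blast
  thus ?thesis using is_P1_copy_curves[where 'k='k, OF a] by auto
qed

lemma P1_component_subset_Pd_An:
  assumes "i < 2 * n - 6"
  shows "P1_component i \<subseteq> Pd_An TYPE('k::field) n 2"
proof -
  obtain a where a: "2 \<le> a" "a + 2 \<le> n" and "(P1_component i :: (nat \<Rightarrow> (nat \<Rightarrow> 'k) set) set)
      \<in> {curve (line_pt a) (const_pt a), curve (const_pt a) (line_pt a)}"
    using P1_component_cases[OF assms] by blast
  thus ?thesis using curves_subset_Pd_An[where 'k='k, OF a] by auto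
qed

theorem proposition3p2:
  fixes n :: nat
  assumes "n \<ge> 3"
  shows "(\<forall>d. 3 \<le> d \<and> d \<le> n - 1 \<longrightarrow> card (Pd_An TYPE('k::alg_closed_field) n d) = 2 * n - 2 * d)
       \<and> (\<forall>d. d \<ge> n \<longrightarrow> Pd_An TYPE('k) n d = {})
       \<and> (n > 3 \<longrightarrow> (\<exists>C :: nat \<Rightarrow> (nat \<Rightarrow> (nat \<Rightarrow> 'k) set) set.
              (\<forall>i < 2 * n - 6. is_P1_copy (n - 1) (C i)) \<and> inj_on C {..< 2 * n - 6} \<and>
              (\<Union>i < 2 * n - 6. C i) = Pd_An TYPE('k) n 2))
       \<and> (n = 3 \<longrightarrow> card (Pd_An TYPE('k) n 2) = 2)"
proof (intro conjI allI impI)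
  fix d assume "3 \<le> d \<and> d \<le> n - 1"
  thus "card (Pd_An TYPE('k) n d) = 2 * n - 2 * d"
    using Pd_An_eq_monotone_points[where 'k='k] card_monotone_points[where 'k='k]
    by (simp add: diff_mult_distrib2)
next
  fix d assume "n \<le> d"
  hence "{1..n - d} = {}" "{d..n - 1} = {}" using assms by auto
  thus "Pd_An TYPE('k) n d = {}"
    using Pd_An_eq_monotone_points[where 'k='k, of d n] \<open>n \<le> d\<close> assms by simp
next
  assume "3 < n"
  show "\<exists>C :: nat \<Rightarrow> (nat \<Rightarrow> (nat \<Rightarrow> 'k) set) set.
          (\<forall>i < 2 * n - 6. is_P1_copy (n - 1) (C i)) \<and> inj_on C {..< 2 * n - 6} \<and>
          (\<Union>i < 2 * n - 6. C i) = Pd_An TYPE('k) n 2"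
  proof (intro exI[of _ P1_component] conjI allI impI)
    show "is_P1_copy (n - 1) (P1_component i :: (nat \<Rightarrow> (nat \<Rightarrow> 'k) set) set)" if "i < 2 * n - 6" for i
      using is_P1_copy_P1_component[OF that] .
    show "inj_on (P1_component :: nat \<Rightarrow> (nat \<Rightarrow> (nat \<Rightarrow> 'k) set) set) {..<2 * n - 6}"
      using inj_P1_component by (rule inj_on_subset) simp
    show "(\<Union>i<2 * n - 6. P1_component i) = Pd_An TYPE('k) n 2"
      using P1_component_subset_Pd_An[where 'k='k] Pd_An_2_subset_components[where 'k='k, OF \<open>3 < n\<close>]
      by blast
  qed
next
  assume "n = 3"
  have "card (Pd_An TYPE('k) 3 2) = 2 * (3 - 2)"
    unfolding Pd_An_3_2 by (rule card_monotone_points) simp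
  thus "card (Pd_An TYPE('k) n 2) = 2" using \<open>n = 3\<close> by simp
qed

end
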